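(* For a two-player stage game $G$, we have $G\notin\mathcal{G}_{LS}^{p,p}$ and $G\in\mathcal{G}_{LS}^{m,p}$ if and only if one of the following holds: (1) $|V_1^{p,p}|=0$, $|V_2^{p,p}|=0$, and condition $\mathcal{C}^{m,p}(G)$ holds; (2) $|V_1^{p,p}|=1$, $|V_2^{p,p}|=1$, and $\mathcal{C}^{m,p}(G)$ holds; (3) $|V_1^{p,p}|>1$, $|V_2^{p,p}|=1$, there do not exist $\hat a_1,a_1'\in A_1$, $\hat a_2\in A_2$ with $u_1(\hat a_1,\hat a_2)<u_1(a_1',\hat a_2)$ and $\hat a_2$ a best response to $\hat a_1$, and $\mathcal{C}^{m,p}(G)$ holds.
   Context: A two-player stage game $G$ has finite nonempty action sets $A_1,A_2$ and payoffs $u_1,u_2:A_1\times A_2\to\mathbb{R}$, extended to mixed strategies by expectation; $S_{\sigma_1}$ is the support of $\sigma_1$; best response means maximizing expected payoff against the opponent's strategy. $G(T)$ is the $T$-round repetition with realized actions observed each round and payoffs the expected sum of stage payoffs; an SPE of $G(T)$ is a strategy profile whose continuation after every history of length $k<T$ is a Nash equilibrium of $G(T-k)$. Regimes: pure-pure ($p,p$): both players restricted to actions (in the stage game and in every round, including deviations); mixed-pure ($m,p$): player 1 may mix, player 2 uses only actions; mixed-mixed ($m,m$): both may mix. For regime $r$, $\mathrm{Nash}^r(G)$ is the set of stage-game profiles available in $r$ from which no player can profitably deviate unilaterally to a strategy available in $r$, and $V_i^r=\{u_i(\sigma):\sigma\in\mathrm{Nash}^r(G)\}$. Locally suboptimal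 behavior occurs in an SPE $\mu$ of $G(T)$ (regime $r$) if for some history $h$ of length $k<T$, $(\mu_1(h),\mu_2(h))\notin\mathrm{Nash}^r(G)$. $\mathcal{G}_{LS}^r$ is the set of stage games $G$ for which there exist $T\ge1$ and an SPE of $G(T)$ in regime $r$ in which locally suboptimal behavior occurs. Condition $\mathcal{C}^{m,p}(G)$ holds iff one of: (i) $|V_1^{m,p}|>1$, $|V_2^{m,p}|>1$, and some $(\hat\sigma_1,\hat a_2)\in\Delta A_1\times A_2$ is not in $\mathrm{Nash}^{m,p}(G)$; (ii) $|V_1^{m,p}|>1$, $|V_2^{m,p}|=1$, and there exist $\hat\sigma_1\in\Delta A_1$, $a_1'\in A_1$, $\hat a_2\in A_2$ with $u_1(\hat\sigma_1,\hat a_2)<u_1(a_1',\hat a_2)$, $\hat a_2$ a best response to $\hat\sigma_1$, and, if $|S_{\hat\sigma_1}|>1$, with $D=\{u_1(\sigma)-u_1(\sigma'):\sigma,\sigma'\in\mathrm{Nash}^{m,p}(G)\}$, some $a\in S_{\hat\sigma_1}$ such that for every $a'\in S_{\hat\sigma_1}\setminus\{a\}$ there are an integer $n\ge0$ and $d_1,\dots,d_n\in D$ with $u_1(a,\hat a_2)-u_1(a',\hat a_2)=\sum_{k=1}^n d_k$; (iii) $|V_1^{m,p}|=1$, $|V_2^{m,p}|>1$, and there exist $\hat\sigma_1\in\Delta A_1$, $\hat a_2,a_2'\in A_2$ with $u_2(\hat\sigma_1,\hat a_2)<u_2(\hat\sigma_1,a_2')$ and $\hat\sigma_1$ a best response to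 $\hat a_2$. *)

theory Defs
  imports Complex_Main
begin

datatype regime = PP | MP | MM

definition mixed :: "'c set \<Rightarrow> ('c \<Rightarrow> real) \<Rightarrow> bool" where
  "mixed A \<sigma> \<longleftrightarrow> (\<forall>x. 0 \<le> \<sigma> x) \<and> (\<forall>x. x \<notin> A \<longrightarrow> \<sigma> x = 0) \<and> sum \<sigma> A = 1"

definition pt :: "'c \<Rightarrow> 'c \<Rightarrow> real" where
  "pt a = (\<lambda>x. if x = a then 1 else 0)"

definition pure :: "'c set \<Rightarrow> ('c \<Rightarrow> real) \<Rightarrow> bool" where
  "pure A \<sigma> \<longleftrightarrow> (\<exists>a\<in>A. \<sigma> = pt a)"

definition support :: "('c \<Rightarrow> real) \<Rightarrow> 'c set" where
  "support \<sigma> = {a. 0 < \<sigma> a}"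

definition avail1 :: "regime \<Rightarrow> 'a set \<Rightarrow> ('a \<Rightarrow> real) \<Rightarrow> bool" where
  "avail1 r A \<sigma> = (if r = PP then pure A \<sigma> else mixed A \<sigma>)"

definition avail2 :: "regime \<Rightarrow> 'b set \<Rightarrow> ('b \<Rightarrow> real) \<Rightarrow> bool" where
  "avail2 r A \<sigma> = (if r = MM then mixed A \<sigma> else pure A \<sigma>)"

definition EU :: "'a set \<Rightarrow> 'b set \<Rightarrow> ('a \<Rightarrow> 'b \<Rightarrow> real) \<Rightarrow> ('a \<Rightarrow> real) \<Rightarrow> ('b \<Rightarrow> real) \<Rightarrow> real" where
  "EU A1 A2 u \<sigma>1 \<sigma>2 = (\<Sum>a1\<in>A1. \<Sum>a2\<in>A2. \<sigma>1 a1 * \<sigma>2 a2 * u a1 a2)"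

definition nash :: "regime \<Rightarrow> 'a set \<Rightarrow> 'b set \<Rightarrow> ('a \<Rightarrow> 'b \<Rightarrow> real) \<Rightarrow> ('a \<Rightarrow> 'b \<Rightarrow> real)
    \<Rightarrow> ('a \<Rightarrow> real) \<Rightarrow> ('b \<Rightarrow> real) \<Rightarrow> bool" where
  "nash r A1 A2 u1 u2 \<sigma>1 \<sigma>2 \<longleftrightarrow>
     avail1 r A1 \<sigma>1 \<and> avail2 r A2 \<sigma>2 \<and>
     (\<forall>\<tau>. avail1 r A1 \<tau> \<longrightarrow> EU A1 A2 u1 \<tau> \<sigma>2 \<le> EU A1 A2 u1 \<sigma>1 \<sigma>2) \<and>
     (\<forall>\<tau>. avail2 r A2 \<tau> \<longrightarrow> EU A1 A2 u2 \<sigma>1 \<tau> \<le> EU A1 A2 u2 \<sigma>1 \<sigma>2)"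

definition NashSet :: "regime \<Rightarrow> 'a set \<Rightarrow> 'b set \<Rightarrow> ('a \<Rightarrow> 'b \<Rightarrow> real) \<Rightarrow> ('a \<Rightarrow> 'b \<Rightarrow> real)
    \<Rightarrow> (('a \<Rightarrow> real) \<times> ('b \<Rightarrow> real)) set" where
  "NashSet r A1 A2 u1 u2 = {(\<sigma>1, \<sigma>2). nash r A1 A2 u1 u2 \<sigma>1 \<sigma>2}"

definition V1 :: "regime \<Rightarrow> 'a set \<Rightarrow> 'b set \<Rightarrow> ('a \<Rightarrow> 'b \<Rightarrow> real) \<Rightarrow> ('a \<Rightarrow> 'b \<Rightarrow> real) \<Rightarrow> real set" where
  "V1 r A1 A2 u1 u2 = (\<lambda>(\<sigma>1, \<sigma>2). EU A1 A2 u1 \<sigma>1 \<sigma>2) ` NashSet r A1 A2 u1 u2"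

definition V2 :: "regime \<Rightarrow> 'a set \<Rightarrow> 'b set \<Rightarrow> ('a \<Rightarrow> 'b \<Rightarrow> real) \<Rightarrow> ('a \<Rightarrow> 'b \<Rightarrow> real) \<Rightarrow> real set" where
  "V2 r A1 A2 u1 u2 = (\<lambda>(\<sigma>1, \<sigma>2). EU A1 A2 u2 \<sigma>1 \<sigma>2) ` NashSet r A1 A2 u1 u2"

(* |V| > 1 (V may a priori be infinite) *)
definition more_than_one :: "'c set \<Rightarrow> bool" where
  "more_than_one V \<longleftrightarrow> infinite V \<or> 1 < card V"

(* Repeated game: histories are lists of realized action profiles; a strategy maps
   histories to stage strategies. rep_payoff ... h n is player's expected sum of
   stage payoffs over n rounds, starting after history h. *)
primrec rep_payoff :: "'a set \<Rightarrow> 'b set \<Rightarrow> ('a \<Rightarrow> 'b \<Rightarrow> real)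
    \<Rightarrow> (('a \<times> 'b) list \<Rightarrow> 'a \<Rightarrow> real) \<Rightarrow> (('a \<times> 'b) list \<Rightarrow> 'b \<Rightarrow> real)
    \<Rightarrow> ('a \<times> 'b) list \<Rightarrow> nat \<Rightarrow> real" where
  "rep_payoff A1 A2 u \<mu>1 \<mu>2 h 0 = 0"
| "rep_payoff A1 A2 u \<mu>1 \<mu>2 h (Suc n) =
     (\<Sum>a1\<in>A1. \<Sum>a2\<in>A2. \<mu>1 h a1 * \<mu>2 h a2 *
        (u a1 a2 + rep_payoff A1 A2 u \<mu>1 \<mu>2 (h @ [(a1, a2)]) n))"

definition strat1 :: "regime \<Rightarrow> 'a set \<Rightarrow> (('a \<times> 'b) list \<Rightarrow> 'a \<Rightarrow> real) \<Rightarrow> bool" where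
  "strat1 r A1 \<mu> \<longleftrightarrow> (\<forall>h. avail1 r A1 (\<mu> h))"

definition strat2 :: "regime \<Rightarrow> 'b set \<Rightarrow> (('a \<times> 'b) list \<Rightarrow> 'b \<Rightarrow> real) \<Rightarrow> bool" where
  "strat2 r A2 \<mu> \<longleftrightarrow> (\<forall>h. avail2 r A2 (\<mu> h))"

definition nash_rep :: "regime \<Rightarrow> 'a set \<Rightarrow> 'b set \<Rightarrow> ('a \<Rightarrow> 'b \<Rightarrow> real) \<Rightarrow> ('a \<Rightarrow> 'b \<Rightarrow> real)
    \<Rightarrow> nat \<Rightarrow> (('a \<times> 'b) list \<Rightarrow> 'a \<Rightarrow> real) \<Rightarrow> (('a \<times> 'b) list \<Rightarrow> 'b \<Rightarrow> real) \<Rightarrow> bool" where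
  "nash_rep r A1 A2 u1 u2 n \<mu>1 \<mu>2 \<longleftrightarrow>
     strat1 r A1 \<mu>1 \<and> strat2 r A2 \<mu>2 \<and>
     (\<forall>\<tau>. strat1 r A1 \<tau> \<longrightarrow> rep_payoff A1 A2 u1 \<tau> \<mu>2 [] n \<le> rep_payoff A1 A2 u1 \<mu>1 \<mu>2 [] n) \<and>
     (\<forall>\<tau>. strat2 r A2 \<tau> \<longrightarrow> rep_payoff A1 A2 u2 \<mu>1 \<tau> [] n \<le> rep_payoff A1 A2 u2 \<mu>1 \<mu>2 [] n)"

definition SPE :: "regime \<Rightarrow> 'a set \<Rightarrow> 'b set \<Rightarrow> ('a \<Rightarrow> 'b \<Rightarrow> real) \<Rightarrow> ('a \<Rightarrow> 'b \<Rightarrow> real)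
    \<Rightarrow> nat \<Rightarrow> (('a \<times> 'b) list \<Rightarrow> 'a \<Rightarrow> real) \<Rightarrow> (('a \<times> 'b) list \<Rightarrow> 'b \<Rightarrow> real) \<Rightarrow> bool" where
  "SPE r A1 A2 u1 u2 T \<mu>1 \<mu>2 \<longleftrightarrow>
     strat1 r A1 \<mu>1 \<and> strat2 r A2 \<mu>2 \<and>
     (\<forall>h. set h \<subseteq> A1 \<times> A2 \<and> length h < T \<longrightarrow>
        nash_rep r A1 A2 u1 u2 (T - length h) (\<lambda>h'. \<mu>1 (h @ h')) (\<lambda>h'. \<mu>2 (h @ h')))"

definition G_LS :: "regime \<Rightarrow> 'a set \<Rightarrow> 'b set \<Rightarrow> ('a \<Rightarrow> 'b \<Rightarrow> real) \<Rightarrow> ('a \<Rightarrow> 'b \<Rightarrow> real) \<Rightarrow> bool" where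
  "G_LS r A1 A2 u1 u2 \<longleftrightarrow>
     (\<exists>T \<ge> 1. \<exists>\<mu>1 \<mu>2. SPE r A1 A2 u1 u2 T \<mu>1 \<mu>2 \<and>
        (\<exists>h. set h \<subseteq> A1 \<times> A2 \<and> length h < T \<and> \<not> nash r A1 A2 u1 u2 (\<mu>1 h) (\<mu>2 h)))"

definition C_mp :: "'a set \<Rightarrow> 'b set \<Rightarrow> ('a \<Rightarrow> 'b \<Rightarrow> real) \<Rightarrow> ('a \<Rightarrow> 'b \<Rightarrow> real) \<Rightarrow> bool" where
  "C_mp A1 A2 u1 u2 \<longleftrightarrow>
    (let N = NashSet MP A1 A2 u1 u2; W1 = V1 MP A1 A2 u1 u2; W2 = V2 MP A1 A2 u1 u2;
         D = {EU A1 A2 u1 s1 s2 - EU A1 A2 u1 t1 t2 | s1 s2 t1 t2. (s1, s2) \<in> N \<and> (t1, t2) \<in> N}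
     in
     (more_than_one W1 \<and> more_than_one W2 \<and>
        (\<exists>\<sigma>1 a2. mixed A1 \<sigma>1 \<and> a2 \<in> A2 \<and> (\<sigma>1, pt a2) \<notin> N))
   \<or> (more_than_one W1 \<and> card W2 = 1 \<and>
        (\<exists>\<sigma>1 a1' a2. mixed A1 \<sigma>1 \<and> a1' \<in> A1 \<and> a2 \<in> A2 \<and>
           EU A1 A2 u1 \<sigma>1 (pt a2) < u1 a1' a2 \<and>
           (\<forall>b\<in>A2. EU A1 A2 u2 \<sigma>1 (pt b) \<le> EU A1 A2 u2 \<sigma>1 (pt a2)) \<and>
           (1 < card (support \<sigma>1) \<longrightarrow>
              (\<exists>a\<in>support \<sigma>1. \<forall>a'\<in>support \<sigma>1 - {a}.
                 \<exists>ds. set ds \<subseteq> D \<and> u1 a a2 - u1 a' a2 = sum_list ds))))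
   \<or> (card W1 = 1 \<and> more_than_one W2 \<and>
        (\<exists>\<sigma>1 a2 a2'. mixed A1 \<sigma>1 \<and> a2 \<in> A2 \<and> a2' \<in> A2 \<and>
           EU A1 A2 u2 \<sigma>1 (pt a2) < EU A1 A2 u2 \<sigma>1 (pt a2') \<and>
           (\<forall>\<tau>. mixed A1 \<tau> \<longrightarrow> EU A1 A2 u1 \<tau> (pt a2) \<le> EU A1 A2 u1 \<sigma>1 (pt a2)))))"

end

(*
  Locally suboptimal play at a history can only be sustained in a subgame perfect equilibrium by
  letting the continuation depend on the stage outcome there. Looking at a locally suboptimal
  history of maximal length, all later rounds are stage equilibria, so the continuation payoffs
  are sums of stage equilibrium payoffs: a player with a unique equilibrium payoff cannot be
  given incentives and must already best respond, and with player 2 restricted to actions the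
  indifference of player 1 between the actions she mixes over must be paid for by differences of
  her equilibrium payoffs. Conversely, any first-round profile compatible with these restrictions
  is enforced by following each outcome with long enough blocks of stage equilibria that reward
  or punish the players. This characterises the mixed-pure class by C^{m,p}. The same analysis
  of the pure-pure regime shows that when both players, or only player 2, have several pure
  equilibrium payoffs, every game outside the pure-pure class is also outside the mixed-pure
  one, which leaves the three cases of the theorem.
*)

theory Submission
  imports Defs "HOL-Library.More_List"
begin

section \<open>Strategies and stage payoffs\<close>

lemma sum_pt_mult: "finite A \<Longrightarrow> b \<in> A \<Longrightarrow> (\<Sum>x\<in>A. pt b x * f x) = (f b :: real)"
proof -
  assume "finite A" "b \<in> A"
  have "(\<Sum>x\<in>A. pt b x * f x) = (\<Sum>x\<in>A. if x = b then f x else 0)"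
    by (rule sum.cong) (auto simp: pt_def)
  then show ?thesis using \<open>finite A\<close> \<open>b \<in> A\<close> by simp
qed

lemma sum_pt: "finite A \<Longrightarrow> b \<in> A \<Longrightarrow> sum (pt b) A = 1"
  using sum_pt_mult[of A b "\<lambda>_. 1"] by simp

lemma support_pt: "support (pt a) = {a}"
  by (auto simp: support_def pt_def)

lemma mixed_pt: "finite A \<Longrightarrow> a \<in> A \<Longrightarrow> mixed A (pt a)"
  by (auto simp: mixed_def sum_pt pt_def)

lemma avail1_nonneg: "avail1 r A \<sigma> \<Longrightarrow> 0 \<le> \<sigma> x"
  by (auto simp: avail1_def pure_def mixed_def pt_def split: if_splits)

lemma avail2_nonneg: "avail2 r A \<sigma> \<Longrightarrow> 0 \<le> \<sigma> x"
  by (auto simp: avail2_def pure_def mixed_def pt_def split: if_splits)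

lemma avail1_sum: "finite A \<Longrightarrow> avail1 r A \<sigma> \<Longrightarrow> sum \<sigma> A = 1"
  by (auto simp: avail1_def pure_def mixed_def sum_pt split: if_splits)

lemma avail2_sum: "finite A \<Longrightarrow> avail2 r A \<sigma> \<Longrightarrow> sum \<sigma> A = 1"
  by (auto simp: avail2_def pure_def mixed_def sum_pt split: if_splits)

lemma support_subset: "avail1 r A \<sigma> \<Longrightarrow> support \<sigma> \<subseteq> A"
  by (auto simp: avail1_def pure_def mixed_def pt_def support_def split: if_splits)


lemma avail1_pt: "finite A \<Longrightarrow> a \<in> A \<Longrightarrow> r \<noteq> MM \<Longrightarrow> avail1 r A (pt a)"
  by (auto simp: avail1_def pure_def mixed_pt)

lemma avail2_pt: "b \<in> A \<Longrightarrow> r \<noteq> MM \<Longrightarrow> avail2 r A (pt b)"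
  by (auto simp: avail2_def pure_def)

lemma avail2_pure: "avail2 r A \<sigma> \<Longrightarrow> r \<noteq> MM \<Longrightarrow> \<exists>b\<in>A. \<sigma> = pt b"
  by (auto simp: avail2_def pure_def)

lemma avail1_PP: "avail1 PP A \<sigma> \<longleftrightarrow> (\<exists>a\<in>A. \<sigma> = pt a)"
  by (simp add: avail1_def pure_def)

lemma avail1_MP: "avail1 MP A \<sigma> = mixed A \<sigma>"
  by (simp add: avail1_def)

lemma ex_positive_weight:
  assumes "\<And>x. x \<in> A \<Longrightarrow> 0 \<le> \<sigma> x" "sum \<sigma> A = (1 :: real)"
  obtains a where "a \<in> A" "0 < \<sigma> a"
proof -
  have "\<not> (\<forall>a\<in>A. \<sigma> a = 0)" using assms(2) by (metis sum.neutral zero_neq_one)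
  then show thesis using that assms(1) by (auto simp: less_le)
qed

lemma avail1_support_nonempty:
  assumes "finite A" "avail1 r A \<sigma>"
  obtains a where "a \<in> A" "0 < \<sigma> a"
  using ex_positive_weight[OF avail1_nonneg[OF assms(2)] avail1_sum[OF assms]] .

lemma weighted_sum_le:
  assumes "finite A" "\<And>x. x \<in> A \<Longrightarrow> 0 \<le> \<sigma> x" "sum \<sigma> A = 1" "\<And>x. x \<in> A \<Longrightarrow> f x \<le> c"
  shows "(\<Sum>x\<in>A. \<sigma> x * f x) \<le> (c :: real)"
proof -
  have "(\<Sum>x\<in>A. \<sigma> x * f x) \<le> (\<Sum>x\<in>A. \<sigma> x * c)"
    by (rule sum_mono) (simp add: assms mult_left_mono)
  also have "\<dots> = c" by (simp add: assms(3) flip: sum_distrib_right)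
  finally show ?thesis .
qed

lemma weighted_sum_eq_on_support:
  assumes "finite A" "\<And>x. x \<in> A \<Longrightarrow> 0 \<le> \<sigma> x" "sum \<sigma> A = 1"
    and le: "\<And>x. x \<in> A \<Longrightarrow> f x \<le> (\<Sum>y\<in>A. \<sigma> y * f y)" and "x \<in> A" "0 < \<sigma> x"
  shows "f x = (\<Sum>y\<in>A. \<sigma> y * f y :: real)"
proof -
  let ?c = "\<Sum>y\<in>A. \<sigma> y * f y"
  have "(\<Sum>y\<in>A. \<sigma> y * (?c - f y)) = ?c * sum \<sigma> A - ?c"
    by (simp add: right_diff_distrib sum_subtractf sum_distrib_right ac_simps)
  then have "(\<Sum>y\<in>A. \<sigma> y * (?c - f y)) = 0" using assms(3) by simp
  moreover have "\<forall>y\<in>A. 0 \<le> \<sigma> y * (?c - f y)" using assms(2) le by simp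
  ultimately have "\<forall>y\<in>A. \<sigma> y * (?c - f y) = 0" by (simp add: sum_nonneg_eq_0_iff[OF assms(1)])
  then show ?thesis using assms(5,6) by auto
qed

lemma weighted_sum_le_some:
  assumes "finite A" "\<And>x. x \<in> A \<Longrightarrow> 0 \<le> \<sigma> x" "sum \<sigma> A = 1"
  obtains a where "a \<in> A" "(\<Sum>x\<in>A. \<sigma> x * f x) \<le> (f a :: real)"
proof -
  obtain a where a: "a \<in> A" "0 < \<sigma> a" using ex_positive_weight[OF assms(2,3)] .
  show thesis
  proof (cases "\<forall>x\<in>A. f x \<le> (\<Sum>x\<in>A. \<sigma> x * f x)")
    case True
    then have "f a = (\<Sum>x\<in>A. \<sigma> x * f x)" using assms a by (intro weighted_sum_eq_on_support) auto
    then show thesis using that[OF a(1)] by simp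
  next
    case False
    then show thesis using that by (auto simp: not_le)
  qed
qed

lemma weighted_sum_add_const:
  "(\<Sum>a\<in>A. \<sigma> a * (f a + c)) = (\<Sum>a\<in>A. \<sigma> a * f a) + c * sum \<sigma> A" for c :: real
  by (simp add: distrib_left sum.distrib sum_distrib_left sum_distrib_right ac_simps)

lemma ex_nat_mult_bound:
  assumes "finite A" "0 < (\<delta> :: real)"
  obtains M :: nat where "\<And>x M'. x \<in> A \<Longrightarrow> M \<le> M' \<Longrightarrow> f x \<le> real M' * \<delta>"
proof -
  obtain M :: nat where M: "(\<Sum>x\<in>A. \<bar>f x\<bar>) \<le> real M * \<delta>"
    using reals_Archimedean3[OF assms(2)] by (meson less_le)
  have "f x \<le> real M' * \<delta>" if "x \<in> A" "M \<le> M'" for x M'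
  proof -
    have "f x \<le> (\<Sum>x\<in>A. \<bar>f x\<bar>)"
      using order_trans[OF abs_ge_self member_le_sum[of x A "\<lambda>x. \<bar>f x\<bar>"]] that assms by auto
    also have "\<dots> \<le> real M * \<delta>" by (rule M)
    also have "\<dots> \<le> real M' * \<delta>" using that(2) assms(2) by (simp add: mult_right_mono)
    finally show ?thesis .
  qed
  then show thesis by (rule that)
qed

definition payoff_of :: "'a set \<Rightarrow> 'b set \<Rightarrow> ('a \<Rightarrow> 'b \<Rightarrow> real) \<Rightarrow> ('a \<Rightarrow> real) \<times> ('b \<Rightarrow> real) \<Rightarrow> real"
  where "payoff_of A1 A2 u p = EU A1 A2 u (fst p) (snd p)"

definition path_payoff :: "'a set \<Rightarrow> 'b set \<Rightarrow> ('a \<Rightarrow> 'b \<Rightarrow> real) \<Rightarrow> (('a \<Rightarrow> real) \<times> ('b \<Rightarrow> real)) list \<Rightarrow> real"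
  where "path_payoff A1 A2 u ps = sum_list (map (payoff_of A1 A2 u) ps)"

lemma path_payoff_Nil [simp]: "path_payoff A1 A2 u [] = 0"
  by (simp add: path_payoff_def)

lemma path_payoff_replicate [simp]: "path_payoff A1 A2 u (replicate n p) = real n * payoff_of A1 A2 u p"
  by (simp add: path_payoff_def sum_list_replicate)

lemma path_payoff_append [simp]: "path_payoff A1 A2 u (ps @ qs) = path_payoff A1 A2 u ps + path_payoff A1 A2 u qs"
  by (simp add: path_payoff_def)

lemma path_payoff_const:
  "(\<And>p. p \<in> set ps \<Longrightarrow> payoff_of A1 A2 u p = v) \<Longrightarrow> path_payoff A1 A2 u ps = real (length ps) * v"
  by (induction ps) (simp_all add: path_payoff_def algebra_simps)

lemma EU_pt_right: "finite A2 \<Longrightarrow> b \<in> A2 \<Longrightarrow> EU A1 A2 u \<sigma> (pt b) = (\<Sum>a\<in>A1. \<sigma> a * u a b)"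
  unfolding EU_def by (rule sum.cong) (simp_all add: sum_pt_mult mult.assoc flip: sum_distrib_left)

lemma EU_pt_pt: "finite A1 \<Longrightarrow> finite A2 \<Longrightarrow> a \<in> A1 \<Longrightarrow> b \<in> A2 \<Longrightarrow> EU A1 A2 u (pt a) (pt b) = u a b"
  by (simp add: EU_pt_right sum_pt_mult)

lemma EU_add_const:
  assumes "sum \<sigma>1 A1 = 1" "sum \<sigma>2 A2 = 1"
  shows "(\<Sum>a1\<in>A1. \<Sum>a2\<in>A2. \<sigma>1 a1 * \<sigma>2 a2 * (u a1 a2 + c)) = EU A1 A2 u \<sigma>1 \<sigma>2 + c"
proof -
  have "(\<Sum>a1\<in>A1. \<Sum>a2\<in>A2. \<sigma>1 a1 * \<sigma>2 a2 * c) = c"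
    by (simp add: assms mult.assoc flip: sum_distrib_left sum_distrib_right)
  then show ?thesis using assms by (simp add: EU_def distrib_left sum.distrib)
qed

lemma mem_NashSet: "p \<in> NashSet r A1 A2 u1 u2 \<longleftrightarrow> nash r A1 A2 u1 u2 (fst p) (snd p)"
  by (simp add: NashSet_def split_beta)

lemma V1_eq_image: "V1 r A1 A2 u1 u2 = payoff_of A1 A2 u1 ` NashSet r A1 A2 u1 u2"
  by (auto simp: V1_def payoff_of_def split_beta)

lemma V2_eq_image: "V2 r A1 A2 u1 u2 = payoff_of A1 A2 u2 ` NashSet r A1 A2 u1 u2"
  by (auto simp: V2_def payoff_of_def split_beta)

lemma more_than_one_imp_less:
  fixes V :: "real set"
  assumes "more_than_one V"
  obtains x y where "x \<in> V" "y \<in> V" "x < y"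
proof -
  have "\<not> V \<subseteq> {x}" for x
  proof
    assume "V \<subseteq> {x}"
    then have "finite V" "card V \<le> 1" using card_mono[of "{x}" V] finite_subset by auto
    then show False using assms by (simp add: more_than_one_def)
  qed
  then obtain x y where "x \<in> V" "y \<in> V" "x \<noteq> y" by blast
  then show thesis using that by (cases "x < y") auto
qed

lemma card_1_or_more_than_one: "V \<noteq> {} \<Longrightarrow> card V = 1 \<or> more_than_one V"
proof (cases "finite V")
  case True
  assume "V \<noteq> {}"
  then have "card V \<noteq> 0" using True by simp
  then show ?thesis by (auto simp: more_than_one_def)
qed (simp add: more_than_one_def)

lemma more_than_one_V1_obtain:
  assumes "more_than_one (V1 r A1 A2 u1 u2)"
  obtains p q where "p \<in> NashSet r A1 A2 u1 u2" "q \<in> NashSet r A1 A2 u1 u2"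
    "payoff_of A1 A2 u1 p < payoff_of A1 A2 u1 q"
  using more_than_one_imp_less[OF assms] unfolding V1_eq_image by blast

lemma more_than_one_V2_obtain:
  assumes "more_than_one (V2 r A1 A2 u1 u2)"
  obtains p q where "p \<in> NashSet r A1 A2 u1 u2" "q \<in> NashSet r A1 A2 u1 u2"
    "payoff_of A1 A2 u2 p < payoff_of A1 A2 u2 q"
  using more_than_one_imp_less[OF assms] unfolding V2_eq_image by blast

lemma pure_deviations_suffice:
  assumes "finite A1" "finite A2" "r \<noteq> MM" "b \<in> A2"
  shows "(\<forall>\<tau>. avail1 r A1 \<tau> \<longrightarrow> EU A1 A2 u \<tau> (pt b) \<le> c) \<longleftrightarrow> (\<forall>a\<in>A1. u a b \<le> c)"
proof
  assume "\<forall>\<tau>. avail1 r A1 \<tau> \<longrightarrow> EU A1 A2 u \<tau> (pt b) \<le> c"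
  then show "\<forall>a\<in>A1. u a b \<le> c" using assms by (metis avail1_pt EU_pt_pt)
next
  assume le: "\<forall>a\<in>A1. u a b \<le> c"
  show "\<forall>\<tau>. avail1 r A1 \<tau> \<longrightarrow> EU A1 A2 u \<tau> (pt b) \<le> c"
  proof (intro allI impI)
    fix \<tau> assume "avail1 r A1 \<tau>"
    then have "(\<Sum>a\<in>A1. \<tau> a * u a b) \<le> c"
      using le assms(1) by (intro weighted_sum_le) (auto intro: avail1_nonneg avail1_sum)
    then show "EU A1 A2 u \<tau> (pt b) \<le> c" using assms by (simp add: EU_pt_right)
  qed
qed

lemma nash_pt_right_iff:
  assumes "finite A1" "finite A2" "r \<noteq> MM" "b \<in> A2"
  shows "nash r A1 A2 u1 u2 \<sigma> (pt b) \<longleftrightarrow> avail1 r A1 \<sigma> \<and>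
    (\<forall>a\<in>A1. u1 a b \<le> EU A1 A2 u1 \<sigma> (pt b)) \<and> (\<forall>b'\<in>A2. EU A1 A2 u2 \<sigma> (pt b') \<le> EU A1 A2 u2 \<sigma> (pt b))"
proof -
  have "(\<forall>\<tau>. avail2 r A2 \<tau> \<longrightarrow> EU A1 A2 u2 \<sigma> \<tau> \<le> EU A1 A2 u2 \<sigma> (pt b))
      \<longleftrightarrow> (\<forall>b'\<in>A2. EU A1 A2 u2 \<sigma> (pt b') \<le> EU A1 A2 u2 \<sigma> (pt b))"
    using avail2_pt[OF _ assms(3)] avail2_pure[OF _ assms(3)] by metis
  then show ?thesis
    using avail2_pt[OF assms(4,3)] unfolding nash_def pure_deviations_suffice[OF assms, symmetric] by simp
qed

lemma nash_pt_pt_iff: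
  assumes "finite A1" "finite A2" "r \<noteq> MM" "a \<in> A1" "b \<in> A2"
  shows "nash r A1 A2 u1 u2 (pt a) (pt b) \<longleftrightarrow> (\<forall>a'\<in>A1. u1 a' b \<le> u1 a b) \<and> (\<forall>b'\<in>A2. u2 a b' \<le> u2 a b)"
  using assms by (simp add: nash_pt_right_iff avail1_pt EU_pt_pt)

lemma weighted_sum_const_on_support:
  assumes "finite A" "avail1 r A \<sigma>" "\<And>a. a \<in> support \<sigma> \<Longrightarrow> f a = c"
  shows "(\<Sum>a\<in>A. \<sigma> a * f a) = c"
proof -
  have "(\<Sum>a\<in>A. \<sigma> a * f a) = (\<Sum>a\<in>A. \<sigma> a * c)"
    using assms(3) avail1_nonneg[OF assms(2)] by (intro sum.cong) (auto simp: support_def less_le)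
  then show ?thesis by (simp add: avail1_sum[OF assms(1,2)] flip: sum_distrib_right)
qed

lemma best_response_support:
  assumes "finite A1" "finite A2" "avail1 r A1 \<sigma>" "b \<in> A2"
    and br: "\<And>a. a \<in> A1 \<Longrightarrow> u1 a b \<le> EU A1 A2 u1 \<sigma> (pt b)" and "a \<in> A1" "0 < \<sigma> a"
  shows "u1 a b = EU A1 A2 u1 \<sigma> (pt b)"
proof -
  have "u1 a b = (\<Sum>a\<in>A1. \<sigma> a * u1 a b)"
    using assms br by (intro weighted_sum_eq_on_support)
      (auto intro: avail1_nonneg avail1_sum simp: EU_pt_right)
  then show ?thesis using assms by (simp add: EU_pt_right)
qed

section \<open>The one-shot deviation principle\<close>

definition one_shot_payoff :: "'a set \<Rightarrow> 'b set \<Rightarrow> ('a \<Rightarrow> 'b \<Rightarrow> real) \<Rightarrow> ('a \<Rightarrow> real) \<Rightarrow> ('b \<Rightarrow> real)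
    \<Rightarrow> (('a \<times> 'b) list \<Rightarrow> 'a \<Rightarrow> real) \<Rightarrow> (('a \<times> 'b) list \<Rightarrow> 'b \<Rightarrow> real) \<Rightarrow> ('a \<times> 'b) list \<Rightarrow> nat \<Rightarrow> real"
  where "one_shot_payoff A1 A2 u \<sigma>1 \<sigma>2 \<mu>1 \<mu>2 h k =
    (\<Sum>a1\<in>A1. \<Sum>a2\<in>A2. \<sigma>1 a1 * \<sigma>2 a2 * (u a1 a2 + rep_payoff A1 A2 u \<mu>1 \<mu>2 (h @ [(a1, a2)]) k))"

lemma rep_payoff_Suc_one_shot:
  "rep_payoff A1 A2 u \<mu>1 \<mu>2 h (Suc k) = one_shot_payoff A1 A2 u (\<mu>1 h) (\<mu>2 h) \<mu>1 \<mu>2 h k"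
  by (simp add: one_shot_payoff_def)

lemma one_shot_payoff_const:
  assumes "sum \<sigma>1 A1 = 1" "sum \<sigma>2 A2 = 1"
    and "\<And>a1 a2. a1 \<in> A1 \<Longrightarrow> a2 \<in> A2 \<Longrightarrow> rep_payoff A1 A2 u \<mu>1 \<mu>2 (h @ [(a1, a2)]) k = c"
  shows "one_shot_payoff A1 A2 u \<sigma>1 \<sigma>2 \<mu>1 \<mu>2 h k = EU A1 A2 u \<sigma>1 \<sigma>2 + c"
  unfolding one_shot_payoff_def using assms by (simp add: EU_add_const)

lemma rep_payoff_shift:
  "rep_payoff A1 A2 u (\<lambda>g. \<mu>1 (h0 @ g)) (\<lambda>g. \<mu>2 (h0 @ g)) h k = rep_payoff A1 A2 u \<mu>1 \<mu>2 (h0 @ h) k"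
  by (induction k arbitrary: h) simp_all

lemma rep_payoff_cong:
  assumes "\<And>g. \<tau>1 (h @ g) = \<tau>1' (h @ g)" "\<And>g. \<tau>2 (h @ g) = \<tau>2' (h @ g)"
  shows "rep_payoff A1 A2 u \<tau>1 \<tau>2 h k = rep_payoff A1 A2 u \<tau>1' \<tau>2' h k"
  using assms
proof (induction k arbitrary: h)
  case (Suc k)
  have "rep_payoff A1 A2 u \<tau>1 \<tau>2 (h @ [x]) k = rep_payoff A1 A2 u \<tau>1' \<tau>2' (h @ [x]) k" for x
    by (rule Suc.IH) (use Suc.prems in \<open>metis append_assoc\<close>)+
  then show ?case using Suc.prems[of "[]"] by simp
qed simp

lemma rep_payoff_deviation1_le:
  assumes nonneg: "\<And>h a. 0 \<le> \<mu>2 h a" and "strat1 r A1 \<tau>"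
    and one_shot: "\<And>g k \<sigma>. length g + Suc k = L \<Longrightarrow> avail1 r A1 \<sigma> \<Longrightarrow>
      one_shot_payoff A1 A2 u \<sigma> (\<mu>2 g) \<mu>1 \<mu>2 g k \<le> rep_payoff A1 A2 u \<mu>1 \<mu>2 g (Suc k)"
  shows "length h + n = L \<Longrightarrow> rep_payoff A1 A2 u \<tau> \<mu>2 h n \<le> rep_payoff A1 A2 u \<mu>1 \<mu>2 h n"
proof (induction n arbitrary: h)
  case (Suc n)
  have av: "avail1 r A1 (\<tau> h)" using \<open>strat1 r A1 \<tau>\<close> by (simp add: strat1_def)
  have "rep_payoff A1 A2 u \<tau> \<mu>2 h (Suc n) \<le> one_shot_payoff A1 A2 u (\<tau> h) (\<mu>2 h) \<mu>1 \<mu>2 h n"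
    unfolding rep_payoff.simps one_shot_payoff_def using Suc
    by (intro sum_mono mult_left_mono add_left_mono mult_nonneg_nonneg avail1_nonneg[OF av] nonneg)
      simp_all
  also have "\<dots> \<le> rep_payoff A1 A2 u \<mu>1 \<mu>2 h (Suc n)"
    using one_shot[OF _ av] Suc.prems by simp
  finally show ?case .
qed simp

lemma rep_payoff_deviation2_le:
  assumes nonneg: "\<And>h a. 0 \<le> \<mu>1 h a" and "strat2 r A2 \<tau>"
    and one_shot: "\<And>g k \<sigma>. length g + Suc k = L \<Longrightarrow> avail2 r A2 \<sigma> \<Longrightarrow>
      one_shot_payoff A1 A2 u (\<mu>1 g) \<sigma> \<mu>1 \<mu>2 g k \<le> rep_payoff A1 A2 u \<mu>1 \<mu>2 g (Suc k)"
  shows "length h + n = L \<Longrightarrow> rep_payoff A1 A2 u \<mu>1 \<tau> h n \<le> rep_payoff A1 A2 u \<mu>1 \<mu>2 h n"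
proof (induction n arbitrary: h)
  case (Suc n)
  have av: "avail2 r A2 (\<tau> h)" using \<open>strat2 r A2 \<tau>\<close> by (simp add: strat2_def)
  have "rep_payoff A1 A2 u \<mu>1 \<tau> h (Suc n) \<le> one_shot_payoff A1 A2 u (\<mu>1 h) (\<tau> h) \<mu>1 \<mu>2 h n"
    unfolding rep_payoff.simps one_shot_payoff_def using Suc
    by (intro sum_mono mult_left_mono add_left_mono mult_nonneg_nonneg avail2_nonneg[OF av] nonneg)
      simp_all
  also have "\<dots> \<le> rep_payoff A1 A2 u \<mu>1 \<mu>2 h (Suc n)"
    using one_shot[OF _ av] Suc.prems by simp
  finally show ?case .
qed simp

lemma SPE_if_no_one_shot_deviation:
  assumes s1: "strat1 r A1 \<mu>1" and s2: "strat2 r A2 \<mu>2"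
    and dev1: "\<And>g k \<sigma>. length g + Suc k = T \<Longrightarrow> avail1 r A1 \<sigma> \<Longrightarrow>
      one_shot_payoff A1 A2 u1 \<sigma> (\<mu>2 g) \<mu>1 \<mu>2 g k \<le> rep_payoff A1 A2 u1 \<mu>1 \<mu>2 g (Suc k)"
    and dev2: "\<And>g k \<sigma>. length g + Suc k = T \<Longrightarrow> avail2 r A2 \<sigma> \<Longrightarrow>
      one_shot_payoff A1 A2 u2 (\<mu>1 g) \<sigma> \<mu>1 \<mu>2 g k \<le> rep_payoff A1 A2 u2 \<mu>1 \<mu>2 g (Suc k)"
  shows "SPE r A1 A2 u1 u2 T \<mu>1 \<mu>2"
  unfolding SPE_def
proof (intro conjI s1 s2 allI impI)
  fix h :: "('a \<times> 'b) list" assume "set h \<subseteq> A1 \<times> A2 \<and> length h < T"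
  then have lt: "length h < T" by simp
  let ?m1 = "\<lambda>g. \<mu>1 (h @ g)" and ?m2 = "\<lambda>g. \<mu>2 (h @ g)"
  have dev1': "one_shot_payoff A1 A2 u1 \<sigma> (?m2 g) ?m1 ?m2 g k \<le> rep_payoff A1 A2 u1 ?m1 ?m2 g (Suc k)"
    if "length g + Suc k = T - length h" "avail1 r A1 \<sigma>" for g k \<sigma>
    using dev1[of "h @ g" k \<sigma>] that lt by (simp add: one_shot_payoff_def rep_payoff_shift)
  have dev2': "one_shot_payoff A1 A2 u2 (?m1 g) \<sigma> ?m1 ?m2 g k \<le> rep_payoff A1 A2 u2 ?m1 ?m2 g (Suc k)"
    if "length g + Suc k = T - length h" "avail2 r A2 \<sigma>" for g k \<sigma>
    using dev2[of "h @ g" k \<sigma>] that lt by (simp add: one_shot_payoff_def rep_payoff_shift)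
  have nonneg1: "0 \<le> ?m1 g a" for g a
    by (rule avail1_nonneg[of r A1]) (use s1 in \<open>simp add: strat1_def\<close>)
  have nonneg2: "0 \<le> ?m2 g b" for g b
    by (rule avail2_nonneg[of r A2]) (use s2 in \<open>simp add: strat2_def\<close>)
  show "nash_rep r A1 A2 u1 u2 (T - length h) ?m1 ?m2"
    unfolding nash_rep_def
    using s1 s2 rep_payoff_deviation1_le[OF nonneg2 _ dev1'] rep_payoff_deviation2_le[OF nonneg1 _ dev2']
    by (simp add: strat1_def strat2_def)
qed

lemma SPE_nash_rep:
  assumes "SPE r A1 A2 u1 u2 T \<mu>1 \<mu>2" "set h \<subseteq> A1 \<times> A2" "length h + Suc k = T"
  shows "nash_rep r A1 A2 u1 u2 (Suc k) (\<lambda>g. \<mu>1 (h @ g)) (\<lambda>g. \<mu>2 (h @ g))"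
  using assms by (auto simp: SPE_def dest!: spec[of _ h])

lemma SPE_no_one_shot_deviation1:
  assumes spe: "SPE r A1 A2 u1 u2 T \<mu>1 \<mu>2" and "set h \<subseteq> A1 \<times> A2" "length h + Suc k = T"
    and "avail1 r A1 \<sigma>"
  shows "one_shot_payoff A1 A2 u1 \<sigma> (\<mu>2 h) \<mu>1 \<mu>2 h k \<le> rep_payoff A1 A2 u1 \<mu>1 \<mu>2 h (Suc k)"
proof -
  define \<tau> where "\<tau> = (\<lambda>g. if g = [] then \<sigma> else \<mu>1 (h @ g))"
  have "strat1 r A1 \<tau>" using spe assms(4) by (simp add: SPE_def strat1_def \<tau>_def)
  then have "rep_payoff A1 A2 u1 \<tau> (\<lambda>g. \<mu>2 (h @ g)) [] (Suc k)
      \<le> rep_payoff A1 A2 u1 (\<lambda>g. \<mu>1 (h @ g)) (\<lambda>g. \<mu>2 (h @ g)) [] (Suc k)"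
    using SPE_nash_rep[OF assms(1-3)] by (simp add: nash_rep_def)
  moreover have "rep_payoff A1 A2 u1 \<tau> (\<lambda>g. \<mu>2 (h @ g)) [x] k
      = rep_payoff A1 A2 u1 (\<lambda>g. \<mu>1 (h @ g)) (\<lambda>g. \<mu>2 (h @ g)) [x] k" for x
    by (rule rep_payoff_cong) (simp_all add: \<tau>_def)
  ultimately show ?thesis by (simp add: rep_payoff_shift one_shot_payoff_def \<tau>_def)
qed

lemma SPE_no_one_shot_deviation2:
  assumes spe: "SPE r A1 A2 u1 u2 T \<mu>1 \<mu>2" and "set h \<subseteq> A1 \<times> A2" "length h + Suc k = T"
    and "avail2 r A2 \<sigma>"
  shows "one_shot_payoff A1 A2 u2 (\<mu>1 h) \<sigma> \<mu>1 \<mu>2 h k \<le> rep_payoff A1 A2 u2 \<mu>1 \<mu>2 h (Suc k)"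
proof -
  define \<tau> where "\<tau> = (\<lambda>g. if g = [] then \<sigma> else \<mu>2 (h @ g))"
  have "strat2 r A2 \<tau>" using spe assms(4) by (simp add: SPE_def strat2_def \<tau>_def)
  then have "rep_payoff A1 A2 u2 (\<lambda>g. \<mu>1 (h @ g)) \<tau> [] (Suc k)
      \<le> rep_payoff A1 A2 u2 (\<lambda>g. \<mu>1 (h @ g)) (\<lambda>g. \<mu>2 (h @ g)) [] (Suc k)"
    using SPE_nash_rep[OF assms(1-3)] by (simp add: nash_rep_def)
  moreover have "rep_payoff A1 A2 u2 (\<lambda>g. \<mu>1 (h @ g)) \<tau> [x] k
      = rep_payoff A1 A2 u2 (\<lambda>g. \<mu>1 (h @ g)) (\<lambda>g. \<mu>2 (h @ g)) [x] k" for x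
    by (rule rep_payoff_cong) (simp_all add: \<tau>_def)
  ultimately show ?thesis by (simp add: rep_payoff_shift one_shot_payoff_def \<tau>_def)
qed

lemma SPE_final_round_nash:
  assumes fin: "finite A1" "finite A2"
    and spe: "SPE r A1 A2 u1 u2 T \<mu>1 \<mu>2" and h: "set h \<subseteq> A1 \<times> A2" "length h + Suc 0 = T"
  shows "nash r A1 A2 u1 u2 (\<mu>1 h) (\<mu>2 h)"
proof -
  have s: "strat1 r A1 \<mu>1" "strat2 r A2 \<mu>2" using spe by (simp_all add: SPE_def)
  then have sums: "sum (\<mu>1 h) A1 = 1" "sum (\<mu>2 h) A2 = 1"
    using avail1_sum[OF fin(1)] avail2_sum[OF fin(2)] unfolding strat1_def strat2_def by blast+
  have "EU A1 A2 u1 \<tau> (\<mu>2 h) \<le> EU A1 A2 u1 (\<mu>1 h) (\<mu>2 h)" if "avail1 r A1 \<tau>" for \<tau>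
    using SPE_no_one_shot_deviation1[OF spe h that] sums avail1_sum[OF fin(1) that]
    by (simp add: rep_payoff_Suc_one_shot one_shot_payoff_const del: rep_payoff.simps(2))
  moreover have "EU A1 A2 u2 (\<mu>1 h) \<tau> \<le> EU A1 A2 u2 (\<mu>1 h) (\<mu>2 h)" if "avail2 r A2 \<tau>" for \<tau>
    using SPE_no_one_shot_deviation2[OF spe h that] sums avail2_sum[OF fin(2) that]
    by (simp add: rep_payoff_Suc_one_shot one_shot_payoff_const del: rep_payoff.simps(2))
  ultimately show ?thesis using s by (simp add: nash_def strat1_def strat2_def)
qed

lemma G_LS_imp_nash_exists:
  assumes fin: "finite A1" "finite A2" and "a \<in> A1" "b \<in> A2" and "G_LS r A1 A2 u1 u2"
  shows "NashSet r A1 A2 u1 u2 \<noteq> {}"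
proof -
  obtain T \<mu>1 \<mu>2 where "SPE r A1 A2 u1 u2 T \<mu>1 \<mu>2" "1 \<le> T" using assms(5) by (auto simp: G_LS_def)
  moreover have "set (replicate (T - 1) (a, b)) \<subseteq> A1 \<times> A2"
    using assms(3,4) by (simp add: set_replicate_conv_if)
  ultimately have "nash r A1 A2 u1 u2 (\<mu>1 (replicate (T - 1) (a, b))) (\<mu>2 (replicate (T - 1) (a, b)))"
    using SPE_final_round_nash[OF fin] by simp
  then show ?thesis by (auto simp: NashSet_def)
qed

section \<open>Enforcing a first-round profile by continuation equilibria\<close>

lemma one_shot_payoff_pt_right:
  "finite A2 \<Longrightarrow> b \<in> A2 \<Longrightarrow> one_shot_payoff A1 A2 u \<sigma> (pt b) \<mu>1 \<mu>2 h k
    = (\<Sum>a\<in>A1. \<sigma> a * (u a b + rep_payoff A1 A2 u \<mu>1 \<mu>2 (h @ [(a, b)]) k))"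
  unfolding one_shot_payoff_def
  by (rule sum.cong) (simp_all add: sum_pt_mult mult.assoc mult.left_commute[of "pt b _"] flip: sum_distrib_left)

lemma sum_nth_default:
  "length ps = N \<Longrightarrow> (\<Sum>j<N. f (nth_default d ps j)) = sum_list (map f ps)"
  by (simp add: sum_list_sum_nth nth_default_nth atLeast0LessThan)

text \<open>After the first round the strategies below play the stage Nash equilibria listed in
  \<open>L a b\<close>, where \<open>(a, b)\<close> is the first-round outcome (and \<open>p0\<close> once the list is exhausted).\<close>

definition continuation_profile ::
    "('c \<times> 'd) \<Rightarrow> ('a \<Rightarrow> 'b \<Rightarrow> ('c \<times> 'd) list) \<Rightarrow> ('a \<times> 'b) list \<Rightarrow> 'c \<times> 'd"
  where "continuation_profile p0 L h = nth_default p0 (case_prod L (hd h)) (length h - 1)"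

lemma rep_payoff_continuation_profile:
  assumes "\<And>h. h \<noteq> [] \<Longrightarrow> \<mu>1 h = fst (continuation_profile p0 L h)"
    and "\<And>h. h \<noteq> [] \<Longrightarrow> \<mu>2 h = snd (continuation_profile p0 L h)"
    and sums: "\<And>h. sum (\<mu>1 h) A1 = 1" "\<And>h. sum (\<mu>2 h) A2 = 1"
    and "h \<noteq> []"
  shows "rep_payoff A1 A2 u \<mu>1 \<mu>2 h k
    = (\<Sum>j<k. payoff_of A1 A2 u (nth_default p0 (case_prod L (hd h)) (length h - 1 + j)))"
  using \<open>h \<noteq> []\<close>
proof (induction k arbitrary: h)
  case (Suc k)
  then have "rep_payoff A1 A2 u \<mu>1 \<mu>2 (h @ [x]) k
      = (\<Sum>j<k. payoff_of A1 A2 u (nth_default p0 (case_prod L (hd h)) (length h + j)))" for x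
    by simp
  then have "rep_payoff A1 A2 u \<mu>1 \<mu>2 h (Suc k) = EU A1 A2 u (\<mu>1 h) (\<mu>2 h)
      + (\<Sum>j<k. payoff_of A1 A2 u (nth_default p0 (case_prod L (hd h)) (length h + j)))"
    using sums by (simp add: EU_add_const)
  moreover have "Suc (length h - 1 + j) = length h + j" for j using Suc.prems by (cases h) simp_all
  ultimately show ?case
    using assms(1,2)[OF Suc.prems]
    by (simp add: sum.lessThan_Suc_shift payoff_of_def continuation_profile_def del: sum.lessThan_Suc)
qed simp

lemma continuation_profile_in_NashSet:
  "p0 \<in> NashSet r A1 A2 u1 u2 \<Longrightarrow> (\<And>a b. set (L a b) \<subseteq> NashSet r A1 A2 u1 u2) \<Longrightarrow>
    continuation_profile p0 L h \<in> NashSet r A1 A2 u1 u2"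
  using nth_mem by (fastforce simp: continuation_profile_def nth_default_def split_beta)

text \<open>Once play no longer depends on the history, stage Nash equilibria cannot be improved
  upon, so only first-round deviations need to be ruled out.\<close>

lemma SPE_if_first_round_enforced:
  assumes fin: "finite A1" "finite A2" and s: "strat1 r A1 \<mu>1" "strat2 r A2 \<mu>2"
    and later_nash: "\<And>g. g \<noteq> [] \<Longrightarrow> nash r A1 A2 u1 u2 (\<mu>1 g) (\<mu>2 g)"
    and later_const: "\<And>u g k. g \<noteq> [] \<Longrightarrow> \<exists>c. \<forall>x. rep_payoff A1 A2 u \<mu>1 \<mu>2 (g @ [x]) k = c"
    and first1: "\<And>\<sigma>. avail1 r A1 \<sigma> \<Longrightarrow>
      one_shot_payoff A1 A2 u1 \<sigma> (\<mu>2 []) \<mu>1 \<mu>2 [] N \<le> rep_payoff A1 A2 u1 \<mu>1 \<mu>2 [] (Suc N)"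
    and first2: "\<And>\<sigma>. avail2 r A2 \<sigma> \<Longrightarrow>
      one_shot_payoff A1 A2 u2 (\<mu>1 []) \<sigma> \<mu>1 \<mu>2 [] N \<le> rep_payoff A1 A2 u2 \<mu>1 \<mu>2 [] (Suc N)"
  shows "SPE r A1 A2 u1 u2 (Suc N) \<mu>1 \<mu>2"
proof -
  have sums: "sum (\<mu>1 g) A1 = 1" "sum (\<mu>2 g) A2 = 1" for g
    using s avail1_sum[OF fin(1)] avail2_sum[OF fin(2)] unfolding strat1_def strat2_def by blast+
  show ?thesis
  proof (rule SPE_if_no_one_shot_deviation[OF s])
    fix g :: "('a \<times> 'b) list" and k \<sigma> assume len: "length g + Suc k = Suc N" and \<sigma>: "avail1 r A1 \<sigma>"
    show "one_shot_payoff A1 A2 u1 \<sigma> (\<mu>2 g) \<mu>1 \<mu>2 g k \<le> rep_payoff A1 A2 u1 \<mu>1 \<mu>2 g (Suc k)"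
    proof (cases "g = []")
      case False
      then obtain c where "\<And>x. rep_payoff A1 A2 u1 \<mu>1 \<mu>2 (g @ [x]) k = c" using later_const by blast
      then show ?thesis
        using later_nash[OF False] \<sigma> sums avail1_sum[OF fin(1) \<sigma>]
        by (simp add: nash_def rep_payoff_Suc_one_shot one_shot_payoff_const del: rep_payoff.simps)
    qed (use first1[OF \<sigma>] len in simp_all)
  next
    fix g :: "('a \<times> 'b) list" and k \<sigma> assume len: "length g + Suc k = Suc N" and \<sigma>: "avail2 r A2 \<sigma>"
    show "one_shot_payoff A1 A2 u2 (\<mu>1 g) \<sigma> \<mu>1 \<mu>2 g k \<le> rep_payoff A1 A2 u2 \<mu>1 \<mu>2 g (Suc k)"
    proof (cases "g = []")
      case False
      then obtain c where "\<And>x. rep_payoff A1 A2 u2 \<mu>1 \<mu>2 (g @ [x]) k = c" using later_const by blast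
      then show ?thesis
        using later_nash[OF False] \<sigma> sums avail2_sum[OF fin(2) \<sigma>]
        by (simp add: nash_def rep_payoff_Suc_one_shot one_shot_payoff_const del: rep_payoff.simps)
    qed (use first2[OF \<sigma>] len in simp_all)
  qed
qed

lemma SPE_first_round_then_continuation:
  fixes L :: "'a \<Rightarrow> 'b \<Rightarrow> (('a \<Rightarrow> real) \<times> ('b \<Rightarrow> real)) list"
  assumes fin: "finite A1" "finite A2" and r: "r \<noteq> MM"
    and \<sigma>: "avail1 r A1 \<sigma>" and b: "b \<in> A2" and p0: "p0 \<in> NashSet r A1 A2 u1 u2"
    and L_nash: "\<And>a b'. set (L a b') \<subseteq> NashSet r A1 A2 u1 u2"
    and L_length: "\<And>a b'. length (L a b') = N"
    and inc1: "\<And>a. a \<in> A1 \<Longrightarrow> u1 a b + path_payoff A1 A2 u1 (L a b)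
      \<le> (\<Sum>a'\<in>A1. \<sigma> a' * (u1 a' b + path_payoff A1 A2 u1 (L a' b)))"
    and inc2: "\<And>b'. b' \<in> A2 \<Longrightarrow> (\<Sum>a\<in>A1. \<sigma> a * (u2 a b' + path_payoff A1 A2 u2 (L a b')))
      \<le> (\<Sum>a\<in>A1. \<sigma> a * (u2 a b + path_payoff A1 A2 u2 (L a b)))"
  shows "SPE r A1 A2 u1 u2 (Suc N)
    (\<lambda>h. if h = [] then \<sigma> else fst (continuation_profile p0 L h))
    (\<lambda>h. if h = [] then pt b else snd (continuation_profile p0 L h))"
    (is "SPE _ _ _ _ _ _ ?\<mu>1 ?\<mu>2")
proof -
  have nash: "nash r A1 A2 u1 u2 (?\<mu>1 h) (?\<mu>2 h)" if "h \<noteq> []" for h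
    using continuation_profile_in_NashSet[OF p0 L_nash] that by (simp add: mem_NashSet)
  have s1: "strat1 r A1 ?\<mu>1" using \<sigma> nash by (auto simp: strat1_def nash_def)
  have s2: "strat2 r A2 ?\<mu>2" using avail2_pt[OF b r] nash by (auto simp: strat2_def nash_def)
  have sums: "sum (?\<mu>1 h) A1 = 1" "sum (?\<mu>2 h) A2 = 1" for h
    using s1 s2 avail1_sum[OF fin(1)] avail2_sum[OF fin(2)] unfolding strat1_def strat2_def by blast+
  note rep = rep_payoff_continuation_profile[of ?\<mu>1 p0 L ?\<mu>2, OF _ _ sums]
  have first: "rep_payoff A1 A2 u ?\<mu>1 ?\<mu>2 [(a, b')] N = path_payoff A1 A2 u (L a b')" for u a b'
    using rep[of "[(a, b')]" u N] by (simp add: sum_nth_default L_length path_payoff_def)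
  have first_value: "rep_payoff A1 A2 u ?\<mu>1 ?\<mu>2 [] (Suc N) = (\<Sum>a\<in>A1. \<sigma> a * (u a b + path_payoff A1 A2 u (L a b)))"
    for u by (simp only: rep_payoff_Suc_one_shot) (simp add: one_shot_payoff_pt_right fin b first)
  show ?thesis
  proof (rule SPE_if_first_round_enforced[OF fin s1 s2 nash])
    show "\<exists>c. \<forall>x. rep_payoff A1 A2 u ?\<mu>1 ?\<mu>2 (g @ [x]) k = c" if "g \<noteq> []" for u g k
      using rep[of "g @ [_]" u k] that by simp
  next
    fix \<sigma>' assume "avail1 r A1 \<sigma>'"
    then have "(\<Sum>a\<in>A1. \<sigma>' a * (u1 a b + path_payoff A1 A2 u1 (L a b)))
        \<le> (\<Sum>a\<in>A1. \<sigma> a * (u1 a b + path_payoff A1 A2 u1 (L a b)))"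
      using inc1 fin by (intro weighted_sum_le) (auto intro: avail1_nonneg avail1_sum)
    then show "one_shot_payoff A1 A2 u1 \<sigma>' (?\<mu>2 []) ?\<mu>1 ?\<mu>2 [] N \<le> rep_payoff A1 A2 u1 ?\<mu>1 ?\<mu>2 [] (Suc N)"
      using fin b by (simp add: first_value one_shot_payoff_pt_right first del: rep_payoff.simps)
  next
    fix \<sigma>' assume "avail2 r A2 \<sigma>'"
    then obtain b' where "b' \<in> A2" "\<sigma>' = pt b'" using avail2_pure[OF _ r] by blast
    then show "one_shot_payoff A1 A2 u2 (?\<mu>1 []) \<sigma>' ?\<mu>1 ?\<mu>2 [] N \<le> rep_payoff A1 A2 u2 ?\<mu>1 ?\<mu>2 [] (Suc N)"
      using inc2 fin b by (simp add: first_value one_shot_payoff_pt_right first del: rep_payoff.simps)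
  qed
qed

lemma G_LS_if_first_round_enforced:
  fixes L :: "'a \<Rightarrow> 'b \<Rightarrow> (('a \<Rightarrow> real) \<times> ('b \<Rightarrow> real)) list"
  assumes "finite A1" "finite A2" "r \<noteq> MM"
    and "avail1 r A1 \<sigma>" "b \<in> A2" "p0 \<in> NashSet r A1 A2 u1 u2"
    and "\<And>a b'. set (L a b') \<subseteq> NashSet r A1 A2 u1 u2"
    and "\<And>a b'. length (L a b') = N"
    and "\<And>a. a \<in> A1 \<Longrightarrow> u1 a b + path_payoff A1 A2 u1 (L a b)
      \<le> (\<Sum>a'\<in>A1. \<sigma> a' * (u1 a' b + path_payoff A1 A2 u1 (L a' b)))"
    and "\<And>b'. b' \<in> A2 \<Longrightarrow> (\<Sum>a\<in>A1. \<sigma> a * (u2 a b' + path_payoff A1 A2 u2 (L a b')))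
      \<le> (\<Sum>a\<in>A1. \<sigma> a * (u2 a b + path_payoff A1 A2 u2 (L a b)))"
    and "\<not> nash r A1 A2 u1 u2 \<sigma> (pt b)"
  shows "G_LS r A1 A2 u1 u2"
proof -
  note spe = SPE_first_round_then_continuation[OF assms(1-10)]
  have "\<not> nash r A1 A2 u1 u2 ((\<lambda>h. if h = [] then \<sigma> else fst (continuation_profile p0 L h)) [])
      ((\<lambda>h. if h = [] then pt b else snd (continuation_profile p0 L h)) [])"
    using assms(11) by simp
  then show ?thesis unfolding G_LS_def using spe by (intro exI[of _ "Suc N"]) fastforce
qed

text \<open>Profitable stage deviations are deterred by switching, for \<open>M\<close> rounds, between Nash
  equilibria that are good and bad for the deviator; \<open>M\<close> is chosen so large that the loss
  outweighs any stage gain.\<close>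

lemma G_LS_if_values_vary:
  assumes fin: "finite A1" "finite A2" and r: "r \<noteq> MM"
    and V1: "more_than_one (V1 r A1 A2 u1 u2)" and V2: "more_than_one (V2 r A1 A2 u1 u2)"
    and a1: "a1 \<in> A1" and a2: "a2 \<in> A2" and not_nash: "\<not> nash r A1 A2 u1 u2 (pt a1) (pt a2)"
  shows "G_LS r A1 A2 u1 u2"
proof -
  let ?E1 = "payoff_of A1 A2 u1" and ?E2 = "payoff_of A1 A2 u2"
  obtain pl ph where p: "pl \<in> NashSet r A1 A2 u1 u2" "ph \<in> NashSet r A1 A2 u1 u2" "?E1 pl < ?E1 ph"
    using V1 by (rule more_than_one_V1_obtain)
  obtain ql qh where q: "ql \<in> NashSet r A1 A2 u1 u2" "qh \<in> NashSet r A1 A2 u1 u2" "?E2 ql < ?E2 qh"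
    using V2 by (rule more_than_one_V2_obtain)
  obtain M1 where M1: "\<And>a M. a \<in> A1 \<Longrightarrow> M1 \<le> M \<Longrightarrow> u1 a a2 - u1 a1 a2 \<le> real M * (?E1 ph - ?E1 pl)"
    using ex_nat_mult_bound[OF fin(1), of "?E1 ph - ?E1 pl" "\<lambda>a. u1 a a2 - u1 a1 a2"] p(3) by auto
  obtain M2 where M2: "\<And>b M. b \<in> A2 \<Longrightarrow> M2 \<le> M \<Longrightarrow> u2 a1 b - u2 a1 a2 \<le> real M * (?E2 qh - ?E2 ql)"
    using ex_nat_mult_bound[OF fin(2), of "?E2 qh - ?E2 ql" "\<lambda>b. u2 a1 b - u2 a1 a2"] q(3) by auto
  define M where "M = max M1 M2"
  define L where "L a b = replicate M (if a = a1 then ph else pl) @ replicate M (if a = a1 \<and> b \<noteq> a2 then ql else qh)"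
    for a b
  show ?thesis
  proof (rule G_LS_if_first_round_enforced[OF fin r avail1_pt[OF fin(1) a1 r] a2 p(2)])
    show "set (L a b) \<subseteq> NashSet r A1 A2 u1 u2" "length (L a b) = M + M" for a b
      using p q by (auto simp: L_def)
  next
    fix a assume a: "a \<in> A1"
    have "u1 a a2 - u1 a1 a2 \<le> real M * (?E1 ph - ?E1 pl)" using M1[OF a] by (simp add: M_def)
    then show "u1 a a2 + path_payoff A1 A2 u1 (L a a2)
        \<le> (\<Sum>a'\<in>A1. pt a1 a' * (u1 a' a2 + path_payoff A1 A2 u1 (L a' a2)))"
      unfolding sum_pt_mult[OF fin(1) a1] by (cases "a = a1") (auto simp: L_def algebra_simps)
  next
    fix b assume b: "b \<in> A2"
    have "u2 a1 b - u2 a1 a2 \<le> real M * (?E2 qh - ?E2 ql)" using M2[OF b] by (simp add: M_def)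
    then show "(\<Sum>a\<in>A1. pt a1 a * (u2 a b + path_payoff A1 A2 u2 (L a b)))
        \<le> (\<Sum>a\<in>A1. pt a1 a * (u2 a a2 + path_payoff A1 A2 u2 (L a a2)))"
      unfolding sum_pt_mult[OF fin(1) a1] by (cases "b = a2") (auto simp: L_def algebra_simps)
  qed (use not_nash in simp)
qed

lemma G_LS_if_player2_values_vary:
  assumes fin: "finite A1" "finite A2" and r: "r \<noteq> MM"
    and V1: "card (V1 r A1 A2 u1 u2) = 1" and V2: "more_than_one (V2 r A1 A2 u1 u2)"
    and \<sigma>: "avail1 r A1 \<sigma>" and a2: "a2 \<in> A2" and a2': "a2' \<in> A2"
    and gain: "EU A1 A2 u2 \<sigma> (pt a2) < EU A1 A2 u2 \<sigma> (pt a2')"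
    and br: "\<And>\<tau>. avail1 r A1 \<tau> \<Longrightarrow> EU A1 A2 u1 \<tau> (pt a2) \<le> EU A1 A2 u1 \<sigma> (pt a2)"
  shows "G_LS r A1 A2 u1 u2"
proof -
  let ?E2 = "payoff_of A1 A2 u2"
  obtain v where "V1 r A1 A2 u1 u2 = {v}" using V1 card_1_singletonE by blast
  then have E1: "payoff_of A1 A2 u1 p = v" if "p \<in> NashSet r A1 A2 u1 u2" for p
    using that unfolding V1_eq_image by blast
  obtain ql qh where q: "ql \<in> NashSet r A1 A2 u1 u2" "qh \<in> NashSet r A1 A2 u1 u2" "?E2 ql < ?E2 qh"
    using V2 by (rule more_than_one_V2_obtain)
  obtain M where M: "\<And>b. b \<in> A2 \<Longrightarrow>
      EU A1 A2 u2 \<sigma> (pt b) - EU A1 A2 u2 \<sigma> (pt a2) \<le> real M * (?E2 qh - ?E2 ql)"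
    using ex_nat_mult_bound[OF fin(2), of "?E2 qh - ?E2 ql" "\<lambda>b. EU A1 A2 u2 \<sigma> (pt b) - EU A1 A2 u2 \<sigma> (pt a2)"]
      q(3) by (meson diff_gt_0_iff_gt order_refl)
  define L where "L (a :: 'a) b = replicate M (if b = a2 then qh else ql)" for a b
  have sum_\<sigma>: "sum \<sigma> A1 = 1" using avail1_sum[OF fin(1) \<sigma>] .
  show ?thesis
  proof (rule G_LS_if_first_round_enforced[OF fin r \<sigma> a2 q(2)])
    show "set (L a b) \<subseteq> NashSet r A1 A2 u1 u2" "length (L a b) = M" for a b
      using q by (auto simp: L_def)
  next
    fix a assume "a \<in> A1"
    then have "u1 a a2 \<le> EU A1 A2 u1 \<sigma> (pt a2)" using br avail1_pt[OF fin(1) _ r] fin a2 by (metis EU_pt_pt)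
    then show "u1 a a2 + path_payoff A1 A2 u1 (L a a2)
        \<le> (\<Sum>a'\<in>A1. \<sigma> a' * (u1 a' a2 + path_payoff A1 A2 u1 (L a' a2)))"
      using q by (simp add: L_def E1 weighted_sum_add_const sum_\<sigma> EU_pt_right[OF fin(2) a2])
  next
    fix b assume b: "b \<in> A2"
    show "(\<Sum>a\<in>A1. \<sigma> a * (u2 a b + path_payoff A1 A2 u2 (L a b)))
        \<le> (\<Sum>a\<in>A1. \<sigma> a * (u2 a a2 + path_payoff A1 A2 u2 (L a a2)))"
      using M[OF b] q(3)
      by (cases "b = a2")
        (auto simp: L_def weighted_sum_add_const sum_\<sigma> EU_pt_right fin a2 b right_diff_distrib)
  next
    show "\<not> nash r A1 A2 u1 u2 \<sigma> (pt a2)" using gain avail2_pt[OF a2' r] by (auto simp: nash_def)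
  qed
qed

definition compensating_path :: "'a list \<Rightarrow> ('a \<Rightarrow> ('p \<times> 'p) list) \<Rightarrow> 'a \<Rightarrow> 'p list"
  where "compensating_path xs pairs a = concat (map (\<lambda>x. map (if x = a then fst else snd) (pairs x)) xs)"

lemma length_compensating_path: "length (compensating_path xs pairs a) = (\<Sum>x\<leftarrow>xs. length (pairs x))"
  by (simp add: compensating_path_def length_concat comp_def)

lemma compensating_path_subset:
  "(\<And>x. x \<in> set xs \<Longrightarrow> set (pairs x) \<subseteq> N \<times> N) \<Longrightarrow> set (compensating_path xs pairs a) \<subseteq> N"
  by (fastforce simp: compensating_path_def)

lemma path_payoff_diff_pairs:
  "path_payoff A1 A2 u (map fst ps) - path_payoff A1 A2 u (map snd ps)
    = sum_list (map (\<lambda>(p, q). payoff_of A1 A2 u p - payoff_of A1 A2 u q) ps)"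
  by (induction ps) (auto simp: path_payoff_def)

lemma path_payoff_compensating_path:
  assumes "distinct xs"
    and "\<And>x. x \<in> set xs \<Longrightarrow> d x = sum_list (map (\<lambda>(p, q). payoff_of A1 A2 u p - payoff_of A1 A2 u q) (pairs x))"
  shows "path_payoff A1 A2 u (compensating_path xs pairs a)
    = (\<Sum>x\<in>set xs. path_payoff A1 A2 u (map snd (pairs x))) + (if a \<in> set xs then d a else 0)"
  using assms by (induction xs) (auto simp: compensating_path_def path_payoff_diff_pairs[symmetric])

text \<open>The equilibria in the continuation make player 1 indifferent between all actions in the
  support of \<open>\<sigma>\<close>: after \<open>a\<close> the first components of the pairs attached to \<open>a\<close> are played, and
  the second components of all other pairs, which exactly compensates the stage payoff
  difference \<open>u1 a0 a2 - u1 a a2\<close>.\<close>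

lemma G_LS_if_player1_values_vary:
  assumes fin: "finite A1" "finite A2" and r: "r \<noteq> MM"
    and V1: "more_than_one (V1 r A1 A2 u1 u2)" and V2: "card (V2 r A1 A2 u1 u2) = 1"
    and \<sigma>: "avail1 r A1 \<sigma>" and a1': "a1' \<in> A1" and a2: "a2 \<in> A2"
    and gain: "EU A1 A2 u1 \<sigma> (pt a2) < u1 a1' a2"
    and br: "\<And>b. b \<in> A2 \<Longrightarrow> EU A1 A2 u2 \<sigma> (pt b) \<le> EU A1 A2 u2 \<sigma> (pt a2)"
    and a0: "a0 \<in> support \<sigma>"
    and pairs: "\<And>a. a \<in> support \<sigma> - {a0} \<Longrightarrow>
      set (pairs a) \<subseteq> NashSet r A1 A2 u1 u2 \<times> NashSet r A1 A2 u1 u2 \<and>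
      u1 a0 a2 - u1 a a2 = sum_list (map (\<lambda>(p, q). payoff_of A1 A2 u1 p - payoff_of A1 A2 u1 q) (pairs a))"
  shows "G_LS r A1 A2 u1 u2"
proof -
  let ?E1 = "payoff_of A1 A2 u1" and ?N = "NashSet r A1 A2 u1 u2"
  obtain v where "V2 r A1 A2 u1 u2 = {v}" using V2 card_1_singletonE by blast
  then have E2: "payoff_of A1 A2 u2 p = v" if "p \<in> ?N" for p
    using that unfolding V2_eq_image by blast
  obtain pl ph where p: "pl \<in> ?N" "ph \<in> ?N" "?E1 pl < ?E1 ph"
    using V1 by (rule more_than_one_V1_obtain)
  obtain M where M: "\<And>a. a \<in> A1 \<Longrightarrow> u1 a a2 - u1 a0 a2 \<le> real M * (?E1 ph - ?E1 pl)"
    using ex_nat_mult_bound[OF fin(1), of "?E1 ph - ?E1 pl" "\<lambda>a. u1 a a2 - u1 a0 a2"] p(3)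
    by (meson diff_gt_0_iff_gt order_refl)
  obtain xs where xs: "set xs = support \<sigma> - {a0}" "distinct xs"
    using finite_distinct_list[of "support \<sigma> - {a0}"] finite_subset[OF support_subset[OF \<sigma>] fin(1)] by blast
  define L where "L a (b :: 'b) = compensating_path xs pairs a @ replicate M (if a \<in> support \<sigma> then ph else pl)"
    for a b
  define K where "K = u1 a0 a2 + (\<Sum>x\<in>set xs. path_payoff A1 A2 u1 (map snd (pairs x))) + real M * ?E1 ph"
  have path1: "u1 a a2 + path_payoff A1 A2 u1 (L a a2) = K + (u1 a a2 - u1 a0 a2)
      + (if a \<in> set xs then u1 a0 a2 - u1 a a2 else 0) + real M * (?E1 (if a \<in> support \<sigma> then ph else pl) - ?E1 ph)"
    for a using pairs xs by (simp add: L_def K_def path_payoff_compensating_path algebra_simps)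
  have on_support: "u1 a a2 + path_payoff A1 A2 u1 (L a a2) = K" if "a \<in> support \<sigma>" for a
    using that xs(1) by (cases "a = a0") (simp_all add: path1)
  have L_nash: "set (L a b) \<subseteq> ?N" for a b
  proof -
    have "set (compensating_path xs pairs a) \<subseteq> ?N"
      by (rule compensating_path_subset) (use pairs xs(1) in auto)
    then show ?thesis using p by (auto simp: L_def)
  qed
  have path2: "path_payoff A1 A2 u2 (L a b) = real (length (L a b)) * v" for a b
    using L_nash[of a b] E2 by (intro path_payoff_const) blast
  have len: "length (L a b) = (\<Sum>x\<leftarrow>xs. length (pairs x)) + M" for a b
    by (simp add: L_def length_compensating_path)
  show ?thesis
  proof (rule G_LS_if_first_round_enforced[OF fin r \<sigma> a2 p(2) L_nash len])
    show "u1 a a2 + path_payoff A1 A2 u1 (L a a2)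
        \<le> (\<Sum>a'\<in>A1. \<sigma> a' * (u1 a' a2 + path_payoff A1 A2 u1 (L a' a2)))" if "a \<in> A1" for a
      using M[OF that] on_support xs(1) weighted_sum_const_on_support[OF fin(1) \<sigma> on_support]
      by (cases "a \<in> support \<sigma>") (auto simp: path1 algebra_simps)
    show "(\<Sum>a\<in>A1. \<sigma> a * (u2 a b + path_payoff A1 A2 u2 (L a b)))
        \<le> (\<Sum>a\<in>A1. \<sigma> a * (u2 a a2 + path_payoff A1 A2 u2 (L a a2)))" if "b \<in> A2" for b
      using br[OF that] that fin a2 by (simp add: path2 len weighted_sum_add_const EU_pt_right)
    show "\<not> nash r A1 A2 u1 u2 \<sigma> (pt a2)"
      using gain fin a1' a2 by (auto simp: nash_pt_right_iff r not_le)
  qed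
qed

section \<open>The last locally suboptimal history\<close>

definition sums_of :: "real set \<Rightarrow> nat \<Rightarrow> real set"
  where "sums_of V n = {sum_list xs | xs. length xs = n \<and> set xs \<subseteq> V}"

definition differences :: "real set \<Rightarrow> real set"
  where "differences V = {x - y | x y. x \<in> V \<and> y \<in> V}"

lemma sums_of_0: "0 \<in> sums_of V 0"
  unfolding sums_of_def by force

lemma sums_of_Suc:
  assumes "x \<in> V" "s \<in> sums_of V n"
  shows "x + s \<in> sums_of V (Suc n)"
proof -
  obtain xs where "s = sum_list xs" "length xs = n" "set xs \<subseteq> V"
    using assms(2) by (auto simp: sums_of_def)
  then show ?thesis using assms(1) unfolding sums_of_def by (intro CollectI exI[of _ "x # xs"]) auto
qed

lemma sums_of_diff:
  assumes "s \<in> sums_of V n" "t \<in> sums_of V n"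
  obtains ds where "set ds \<subseteq> differences V" "s - t = sum_list ds"
proof -
  obtain xs ys where xs: "s = sum_list xs" "length xs = n" "set xs \<subseteq> V"
    and ys: "t = sum_list ys" "length ys = n" "set ys \<subseteq> V"
    using assms by (auto simp: sums_of_def)
  let ?ds = "map (\<lambda>(x, y). x - y) (zip xs ys)"
  have "s - t = sum_list ?ds"
    using xs ys sum_list_subtractf[of fst snd "zip xs ys"] by (simp add: split_def)
  moreover have "set ?ds \<subseteq> differences V"
    using xs(3) ys(3) by (fastforce simp: differences_def dest: set_zip_leftD set_zip_rightD)
  ultimately show thesis using that by blast
qed

lemma differences_V1:
  "{EU A1 A2 u1 s1 s2 - EU A1 A2 u1 t1 t2 | s1 s2 t1 t2.
      (s1, s2) \<in> NashSet r A1 A2 u1 u2 \<and> (t1, t2) \<in> NashSet r A1 A2 u1 u2}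
    = differences (V1 r A1 A2 u1 u2)"
  by (auto simp: differences_def V1_def)

lemma differences_as_pairs:
  assumes "set ds \<subseteq> differences (V1 r A1 A2 u1 u2)"
  obtains ps where "set ps \<subseteq> NashSet r A1 A2 u1 u2 \<times> NashSet r A1 A2 u1 u2"
    "sum_list ds = sum_list (map (\<lambda>(p, q). payoff_of A1 A2 u1 p - payoff_of A1 A2 u1 q) ps)"
proof -
  have "\<exists>ps. set ps \<subseteq> NashSet r A1 A2 u1 u2 \<times> NashSet r A1 A2 u1 u2 \<and>
      sum_list ds = sum_list (map (\<lambda>(p, q). payoff_of A1 A2 u1 p - payoff_of A1 A2 u1 q) ps)"
    using assms
  proof (induction ds)
    case (Cons d ds)
    then obtain ps where ps: "set ps \<subseteq> NashSet r A1 A2 u1 u2 \<times> NashSet r A1 A2 u1 u2"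
      "sum_list ds = sum_list (map (\<lambda>(p, q). payoff_of A1 A2 u1 p - payoff_of A1 A2 u1 q) ps)" by auto
    obtain p q where "p \<in> NashSet r A1 A2 u1 u2" "q \<in> NashSet r A1 A2 u1 u2"
      "d = payoff_of A1 A2 u1 p - payoff_of A1 A2 u1 q"
      using Cons.prems by (auto simp: differences_def V1_eq_image)
    with ps show ?case by (intro exI[of _ "(p, q) # ps"]) simp
  qed (auto intro: exI[of _ "[]"])
  then show thesis using that by blast
qed

lemma rep_payoff_const_stage:
  assumes sums: "\<And>g. sum (\<mu>1 g) A1 = 1" "\<And>g. sum (\<mu>2 g) A2 = 1"
    and const: "\<And>g. set g \<subseteq> A1 \<times> A2 \<Longrightarrow> length g < n \<Longrightarrow> EU A1 A2 u (\<mu>1 (h @ g)) (\<mu>2 (h @ g)) = v"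
  shows "rep_payoff A1 A2 u \<mu>1 \<mu>2 h n = real n * v"
  using const
proof (induction n arbitrary: h)
  case (Suc n)
  have "rep_payoff A1 A2 u \<mu>1 \<mu>2 (h @ [(a1, a2)]) n = real n * v" if "a1 \<in> A1" "a2 \<in> A2" for a1 a2
    using that Suc.prems[of "(a1, a2) # _"] by (intro Suc.IH) simp
  then have "rep_payoff A1 A2 u \<mu>1 \<mu>2 h (Suc n) = EU A1 A2 u (\<mu>1 h) (\<mu>2 h) + real n * v"
    using sums by (simp add: rep_payoff_Suc_one_shot one_shot_payoff_const del: rep_payoff.simps)
  then show ?case using Suc.prems[of "[]"] by (simp add: algebra_simps)
qed simp

lemma SPE_indifference_on_support:
  assumes fin: "finite A1" "finite A2" and r: "r \<noteq> MM"
    and spe: "SPE r A1 A2 u1 u2 T \<mu>1 \<mu>2" and h: "set h \<subseteq> A1 \<times> A2" "length h + Suc k = T"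
    and b: "b \<in> A2" "\<mu>2 h = pt b" and a: "a \<in> A1" "0 < \<mu>1 h a"
  shows "u1 a b + rep_payoff A1 A2 u1 \<mu>1 \<mu>2 (h @ [(a, b)]) k = rep_payoff A1 A2 u1 \<mu>1 \<mu>2 h (Suc k)"
proof -
  let ?val = "\<lambda>a. u1 a b + rep_payoff A1 A2 u1 \<mu>1 \<mu>2 (h @ [(a, b)]) k"
  have \<mu>1: "avail1 r A1 (\<mu>1 h)" using spe by (simp add: SPE_def strat1_def)
  have rep: "rep_payoff A1 A2 u1 \<mu>1 \<mu>2 h (Suc k) = (\<Sum>a\<in>A1. \<mu>1 h a * ?val a)"
    by (simp only: rep_payoff_Suc_one_shot b(2) one_shot_payoff_pt_right[OF fin(2) b(1)])
  have "?val a' \<le> (\<Sum>a\<in>A1. \<mu>1 h a * ?val a)" if "a' \<in> A1" for a'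
  proof -
    have "one_shot_payoff A1 A2 u1 (pt a') (pt b) \<mu>1 \<mu>2 h k = ?val a'"
      by (simp add: one_shot_payoff_pt_right[OF fin(2) b(1)] sum_pt_mult[OF fin(1) that])
    then show ?thesis using SPE_no_one_shot_deviation1[OF spe h avail1_pt[OF fin(1) that r]] rep b(2)
      by simp
  qed
  from weighted_sum_eq_on_support[OF fin(1) avail1_nonneg[OF \<mu>1] avail1_sum[OF fin(1) \<mu>1] this a]
  show ?thesis unfolding rep .
qed

locale last_deviation =
  fixes r :: regime and A1 :: "'a set" and A2 :: "'b set" and u1 u2 :: "'a \<Rightarrow> 'b \<Rightarrow> real"
    and \<mu>1 :: "('a \<times> 'b) list \<Rightarrow> 'a \<Rightarrow> real" and \<mu>2 :: "('a \<times> 'b) list \<Rightarrow> 'b \<Rightarrow> real"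
    and h :: "('a \<times> 'b) list" and k :: nat
  assumes finite1: "finite A1" and finite2: "finite A2" and player2_pure: "r \<noteq> MM"
    and SPE: "SPE r A1 A2 u1 u2 (length h + Suc k) \<mu>1 \<mu>2"
    and history: "set h \<subseteq> A1 \<times> A2"
    and not_nash: "\<not> nash r A1 A2 u1 u2 (\<mu>1 h) (\<mu>2 h)"
    and later_nash: "\<And>g. set g \<subseteq> A1 \<times> A2 \<Longrightarrow> length h < length g \<Longrightarrow> length g \<le> length h + k \<Longrightarrow>
      nash r A1 A2 u1 u2 (\<mu>1 g) (\<mu>2 g)"

lemma G_LS_obtain_last_deviation:
  assumes "finite A1" "finite A2" "r \<noteq> MM" "G_LS r A1 A2 u1 u2"
  obtains \<mu>1 \<mu>2 h k where "last_deviation r A1 A2 u1 u2 \<mu>1 \<mu>2 h k"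
proof -
  obtain T \<mu>1 \<mu>2 h0 where spe: "SPE r A1 A2 u1 u2 T \<mu>1 \<mu>2"
    and h0: "set h0 \<subseteq> A1 \<times> A2" "length h0 < T" "\<not> nash r A1 A2 u1 u2 (\<mu>1 h0) (\<mu>2 h0)"
    using assms(4) by (auto simp: G_LS_def)
  let ?P = "\<lambda>g. set g \<subseteq> A1 \<times> A2 \<and> length g < T \<and> \<not> nash r A1 A2 u1 u2 (\<mu>1 g) (\<mu>2 g)"
  obtain h where h: "?P h" and maximal: "\<And>g. ?P g \<Longrightarrow> length g \<le> length h"
    using ex_has_greatest_nat[of ?P h0 length T] h0 by blast
  have T: "T = length h + Suc (T - length h - 1)" using h by simp
  have "last_deviation r A1 A2 u1 u2 \<mu>1 \<mu>2 h (T - length h - 1)"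
  proof
    show "SPE r A1 A2 u1 u2 (length h + Suc (T - length h - 1)) \<mu>1 \<mu>2" using spe T by simp
    fix g assume "set g \<subseteq> A1 \<times> A2" "length h < length g" "length g \<le> length h + (T - length h - 1)"
    then show "nash r A1 A2 u1 u2 (\<mu>1 g) (\<mu>2 g)" using maximal[of g] h by fastforce
  qed (use assms h in auto)
  then show thesis by (rule that)
qed

context last_deviation
begin

lemma strategies: "strat1 r A1 \<mu>1" "strat2 r A2 \<mu>2"
  using SPE by (simp_all add: SPE_def)

lemma strategy_sums: "sum (\<mu>1 g) A1 = 1" "sum (\<mu>2 g) A2 = 1"
  using strategies avail1_sum[OF finite1] avail2_sum[OF finite2] unfolding strat1_def strat2_def by blast+

lemma continuation_const:
  assumes "\<And>p. p \<in> NashSet r A1 A2 u1 u2 \<Longrightarrow> payoff_of A1 A2 u p = v" and "x \<in> A1 \<times> A2"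
  shows "rep_payoff A1 A2 u \<mu>1 \<mu>2 (h @ [x]) k = real k * v"
proof (rule rep_payoff_const_stage[OF strategy_sums])
  fix g assume "set g \<subseteq> A1 \<times> A2" "length g < k"
  then have "(\<mu>1 (h @ [x] @ g), \<mu>2 (h @ [x] @ g)) \<in> NashSet r A1 A2 u1 u2"
    using history \<open>x \<in> A1 \<times> A2\<close> later_nash[of "h @ [x] @ g"] by (simp add: NashSet_def)
  then show "EU A1 A2 u (\<mu>1 ((h @ [x]) @ g)) (\<mu>2 ((h @ [x]) @ g)) = v"
    using assms(1) by (force simp: payoff_of_def)
qed

lemma stage_best_response1:
  assumes "V1 r A1 A2 u1 u2 \<subseteq> {v}" "avail1 r A1 \<tau>"
  shows "EU A1 A2 u1 \<tau> (\<mu>2 h) \<le> EU A1 A2 u1 (\<mu>1 h) (\<mu>2 h)"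
proof -
  have "rep_payoff A1 A2 u1 \<mu>1 \<mu>2 (h @ [(a1, a2)]) k = real k * v" if "a1 \<in> A1" "a2 \<in> A2" for a1 a2
    using assms(1) that by (intro continuation_const) (auto simp: V1_eq_image)
  then show ?thesis
    using SPE_no_one_shot_deviation1[OF SPE history _ assms(2)] strategy_sums avail1_sum[OF finite1 assms(2)]
    by (simp add: rep_payoff_Suc_one_shot one_shot_payoff_const del: rep_payoff.simps)
qed

lemma stage_best_response2:
  assumes "V2 r A1 A2 u1 u2 \<subseteq> {v}" "avail2 r A2 \<tau>"
  shows "EU A1 A2 u2 (\<mu>1 h) \<tau> \<le> EU A1 A2 u2 (\<mu>1 h) (\<mu>2 h)"
proof -
  have "rep_payoff A1 A2 u2 \<mu>1 \<mu>2 (h @ [(a1, a2)]) k = real k * v" if "a1 \<in> A1" "a2 \<in> A2" for a1 a2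
    using assms(1) that by (intro continuation_const) (auto simp: V2_eq_image)
  then show ?thesis
    using SPE_no_one_shot_deviation2[OF SPE history _ assms(2)] strategy_sums avail2_sum[OF finite2 assms(2)]
    by (simp add: rep_payoff_Suc_one_shot one_shot_payoff_const del: rep_payoff.simps)
qed

lemma values_not_both_unique: "\<not> (V1 r A1 A2 u1 u2 \<subseteq> {v1} \<and> V2 r A1 A2 u1 u2 \<subseteq> {v2})"
  using stage_best_response1 stage_best_response2 strategies not_nash
  by (auto simp: nash_def strat1_def strat2_def)

lemma continuation_in_sums:
  assumes "set g \<subseteq> A1 \<times> A2" "length h < length g" "length g + n = length h + Suc k"
  shows "rep_payoff A1 A2 u1 \<mu>1 \<mu>2 g n \<in> sums_of (V1 r A1 A2 u1 u2) n"
  using assms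
proof (induction n arbitrary: g)
  case 0 then show ?case by (simp add: sums_of_0)
next
  case (Suc n)
  have nash: "nash r A1 A2 u1 u2 (\<mu>1 g) (\<mu>2 g)" using later_nash Suc.prems by simp
  obtain b where b: "b \<in> A2" "\<mu>2 g = pt b"
    using avail2_pure[OF _ player2_pure] strategies(2) by (meson strat2_def)
  have \<mu>1: "avail1 r A1 (\<mu>1 g)" using strategies(1) by (simp add: strat1_def)
  obtain a where a: "a \<in> A1" "0 < \<mu>1 g a" using avail1_support_nonempty[OF finite1 \<mu>1] .
  have "rep_payoff A1 A2 u1 \<mu>1 \<mu>2 g (Suc n) = u1 a b + rep_payoff A1 A2 u1 \<mu>1 \<mu>2 (g @ [(a, b)]) n"
    using SPE_indifference_on_support[OF finite1 finite2 player2_pure SPE Suc.prems(1) _ b a] Suc.prems(3)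
    by simp
  moreover have "u1 a b \<in> V1 r A1 A2 u1 u2"
  proof -
    have "u1 a b = EU A1 A2 u1 (\<mu>1 g) (\<mu>2 g)"
      using nash b a best_response_support[OF finite1 finite2 \<mu>1 b(1) _ a]
      by (simp add: nash_pt_right_iff[OF finite1 finite2 player2_pure])
    then show ?thesis using nash by (force simp: V1_def NashSet_def)
  qed
  moreover have "rep_payoff A1 A2 u1 \<mu>1 \<mu>2 (g @ [(a, b)]) n \<in> sums_of (V1 r A1 A2 u1 u2) n"
    using Suc.prems a(1) b(1) by (intro Suc.IH) auto
  ultimately show ?case by (simp add: sums_of_Suc)
qed


lemma player1_gains:
  assumes "V2 r A1 A2 u1 u2 \<subseteq> {v}" "b \<in> A2" "\<mu>2 h = pt b"
  shows "\<forall>b'\<in>A2. EU A1 A2 u2 (\<mu>1 h) (pt b') \<le> EU A1 A2 u2 (\<mu>1 h) (pt b)"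
    and "\<exists>a\<in>A1. EU A1 A2 u1 (\<mu>1 h) (pt b) < u1 a b"
proof -
  show br: "\<forall>b'\<in>A2. EU A1 A2 u2 (\<mu>1 h) (pt b') \<le> EU A1 A2 u2 (\<mu>1 h) (pt b)"
    using stage_best_response2[OF assms(1) avail2_pt[OF _ player2_pure]] assms(3) by simp
  show "\<exists>a\<in>A1. EU A1 A2 u1 (\<mu>1 h) (pt b) < u1 a b"
    using not_nash br strategies(1) assms(2,3)
    by (auto simp: nash_pt_right_iff[OF finite1 finite2 player2_pure] strat1_def not_le)
qed

lemma player2_gains:
  assumes "V1 r A1 A2 u1 u2 \<subseteq> {v}" "b \<in> A2" "\<mu>2 h = pt b"
  shows "\<forall>\<tau>. avail1 r A1 \<tau> \<longrightarrow> EU A1 A2 u1 \<tau> (pt b) \<le> EU A1 A2 u1 (\<mu>1 h) (pt b)"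
    and "\<exists>b'\<in>A2. EU A1 A2 u2 (\<mu>1 h) (pt b) < EU A1 A2 u2 (\<mu>1 h) (pt b')"
proof -
  show br: "\<forall>\<tau>. avail1 r A1 \<tau> \<longrightarrow> EU A1 A2 u1 \<tau> (pt b) \<le> EU A1 A2 u1 (\<mu>1 h) (pt b)"
    using stage_best_response1[OF assms(1)] assms(3) by simp
  show "\<exists>b'\<in>A2. EU A1 A2 u2 (\<mu>1 h) (pt b) < EU A1 A2 u2 (\<mu>1 h) (pt b')"
    using not_nash br strategies(1) assms(2,3)
    by (auto simp: nash_pt_right_iff[OF finite1 finite2 player2_pure] strat1_def not_le
        pure_deviations_suffice[OF finite1 finite2 player2_pure, symmetric])
qed

text \<open>Player 1 is indifferent between the actions in the support of \<open>\<mu>1 h\<close>, so their stage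
  payoff differences are compensated by differences of continuation payoffs, which are sums of
  stage equilibrium payoffs.\<close>

lemma support_payoff_differences:
  assumes "b \<in> A2" "\<mu>2 h = pt b" "a \<in> support (\<mu>1 h)" "a' \<in> support (\<mu>1 h)"
  obtains ds where "set ds \<subseteq> differences (V1 r A1 A2 u1 u2)" "u1 a b - u1 a' b = sum_list ds"
proof -
  have supp: "support (\<mu>1 h) \<subseteq> A1" using strategies(1) support_subset by (meson strat1_def)
  have ind: "u1 x b + rep_payoff A1 A2 u1 \<mu>1 \<mu>2 (h @ [(x, b)]) k = rep_payoff A1 A2 u1 \<mu>1 \<mu>2 h (Suc k)"
    if "x \<in> support (\<mu>1 h)" for x
    using SPE_indifference_on_support[OF finite1 finite2 player2_pure SPE history _ assms(1,2)] that supp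
    by (auto simp: support_def)
  have "rep_payoff A1 A2 u1 \<mu>1 \<mu>2 (h @ [(x, b)]) k \<in> sums_of (V1 r A1 A2 u1 u2) k"
    if "x \<in> support (\<mu>1 h)" for x
    using that supp history assms(1) by (intro continuation_in_sums) auto
  then obtain ds where "set ds \<subseteq> differences (V1 r A1 A2 u1 u2)"
    "rep_payoff A1 A2 u1 \<mu>1 \<mu>2 (h @ [(a', b)]) k - rep_payoff A1 A2 u1 \<mu>1 \<mu>2 (h @ [(a, b)]) k = sum_list ds"
    using sums_of_diff assms(3,4) by metis
  moreover have "u1 a b - u1 a' b
      = rep_payoff A1 A2 u1 \<mu>1 \<mu>2 (h @ [(a', b)]) k - rep_payoff A1 A2 u1 \<mu>1 \<mu>2 (h @ [(a, b)]) k"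
    using ind[OF assms(3)] ind[OF assms(4)] by simp
  ultimately show thesis using that by simp
qed

end

lemma not_G_LS_if_unique_values:
  assumes "finite A1" "finite A2" "r \<noteq> MM"
    and "card (V1 r A1 A2 u1 u2) = 1" "card (V2 r A1 A2 u1 u2) = 1"
  shows "\<not> G_LS r A1 A2 u1 u2"
proof
  assume "G_LS r A1 A2 u1 u2"
  then obtain \<mu>1 \<mu>2 h k where "last_deviation r A1 A2 u1 u2 \<mu>1 \<mu>2 h k"
    using G_LS_obtain_last_deviation assms(1-3) by blast
  then show False
    using last_deviation.values_not_both_unique assms(4,5) by (metis card_1_singletonE order_refl)
qed

section \<open>The mixed-pure regime\<close>

lemma C_mp_iff: "C_mp A1 A2 u1 u2 \<longleftrightarrow>
    (more_than_one (V1 MP A1 A2 u1 u2) \<and> more_than_one (V2 MP A1 A2 u1 u2) \<and>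
       (\<exists>\<sigma> b. mixed A1 \<sigma> \<and> b \<in> A2 \<and> \<not> nash MP A1 A2 u1 u2 \<sigma> (pt b)))
  \<or> (more_than_one (V1 MP A1 A2 u1 u2) \<and> card (V2 MP A1 A2 u1 u2) = 1 \<and>
       (\<exists>\<sigma> a' b. mixed A1 \<sigma> \<and> a' \<in> A1 \<and> b \<in> A2 \<and> EU A1 A2 u1 \<sigma> (pt b) < u1 a' b \<and>
          (\<forall>b'\<in>A2. EU A1 A2 u2 \<sigma> (pt b') \<le> EU A1 A2 u2 \<sigma> (pt b)) \<and>
          (1 < card (support \<sigma>) \<longrightarrow> (\<exists>a0\<in>support \<sigma>. \<forall>a\<in>support \<sigma> - {a0}.
             \<exists>ds. set ds \<subseteq> differences (V1 MP A1 A2 u1 u2) \<and> u1 a0 b - u1 a b = sum_list ds))))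
  \<or> (card (V1 MP A1 A2 u1 u2) = 1 \<and> more_than_one (V2 MP A1 A2 u1 u2) \<and>
       (\<exists>\<sigma> b b'. mixed A1 \<sigma> \<and> b \<in> A2 \<and> b' \<in> A2 \<and>
          EU A1 A2 u2 \<sigma> (pt b) < EU A1 A2 u2 \<sigma> (pt b') \<and>
          (\<forall>\<tau>. mixed A1 \<tau> \<longrightarrow> EU A1 A2 u1 \<tau> (pt b) \<le> EU A1 A2 u1 \<sigma> (pt b))))"
  unfolding C_mp_def Let_def differences_V1 by (simp add: NashSet_def)

lemma exists_pure_non_nash:
  assumes fin: "finite A1" "finite A2" and "mixed A1 \<sigma>" "b \<in> A2" "\<not> nash MP A1 A2 u1 u2 \<sigma> (pt b)"
  obtains a where "a \<in> A1" "\<not> nash MP A1 A2 u1 u2 (pt a) (pt b)"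
proof -
  have r: "MP \<noteq> MM" by simp
  have \<sigma>: "avail1 MP A1 \<sigma>" using assms(3) by (simp add: avail1_MP)
  note weights = fin(1) avail1_nonneg[OF \<sigma>] avail1_sum[OF fin(1) \<sigma>]
  note nash_pt = nash_pt_pt_iff[OF fin r _ assms(4)]
  consider a' where "a' \<in> A1" "EU A1 A2 u1 \<sigma> (pt b) < u1 a' b"
    | b' where "b' \<in> A2" "EU A1 A2 u2 \<sigma> (pt b) < EU A1 A2 u2 \<sigma> (pt b')"
    using assms(5) \<sigma> by (auto simp: nash_pt_right_iff[OF fin r assms(4)] not_le)
  then show thesis
  proof cases
    case 1
    obtain a where "a \<in> A1" "(\<Sum>x\<in>A1. \<sigma> x * - u1 x b) \<le> - u1 a b"
      using weighted_sum_le_some[OF weights] .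
    then have "u1 a b < u1 a' b" using 1 by (simp add: EU_pt_right fin sum_negf assms(4))
    then show thesis using that \<open>a \<in> A1\<close> 1(1) by (auto simp: nash_pt not_le)
  next
    case 2
    obtain a where "a \<in> A1" "(\<Sum>x\<in>A1. \<sigma> x * (u2 x b' - u2 x b)) \<le> u2 a b' - u2 a b"
      using weighted_sum_le_some[OF weights] .
    then have "u2 a b < u2 a b'"
      using 2 by (simp add: EU_pt_right fin assms(4) right_diff_distrib sum_subtractf)
    then show thesis using that \<open>a \<in> A1\<close> 2(1) by (auto simp: nash_pt not_le)
  qed
qed

lemma support_anchor:
  assumes "finite A" "avail1 r A \<sigma>" "1 < card (support \<sigma>) \<longrightarrow> (\<exists>a0\<in>support \<sigma>. \<forall>a\<in>support \<sigma> - {a0}. P a0 a)"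
  obtains a0 where "a0 \<in> support \<sigma>" "\<forall>a\<in>support \<sigma> - {a0}. P a0 a"
proof (cases "1 < card (support \<sigma>)")
  case False
  obtain a where "a \<in> A" "0 < \<sigma> a" using avail1_support_nonempty[OF assms(1,2)] .
  moreover have "finite (support \<sigma>)" using support_subset[OF assms(2)] assms(1) finite_subset by blast
  ultimately have "support \<sigma> = {a}" using False by (auto simp: support_def card_le_Suc0_iff_eq not_less)
  then show thesis using that[of a] by simp
qed (use assms(3) that in blast)

lemma G_LS_MP_if_C_mp:
  assumes fin: "finite A1" "finite A2" and C: "C_mp A1 A2 u1 u2"
  shows "G_LS MP A1 A2 u1 u2"
proof -
  have r: "MP \<noteq> MM" by simp
  from C show ?thesis unfolding C_mp_iff
  proof (elim disjE conjE exE)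
    fix \<sigma> b assume V: "more_than_one (V1 MP A1 A2 u1 u2)" "more_than_one (V2 MP A1 A2 u1 u2)"
      and "mixed A1 \<sigma>" "b \<in> A2" "\<not> nash MP A1 A2 u1 u2 \<sigma> (pt b)"
    then obtain a where "a \<in> A1" "\<not> nash MP A1 A2 u1 u2 (pt a) (pt b)"
      using exists_pure_non_nash[OF fin] by metis
    then show ?thesis using G_LS_if_values_vary[OF fin r V] \<open>b \<in> A2\<close> by blast
  next
    fix \<sigma> a' b assume V: "more_than_one (V1 MP A1 A2 u1 u2)" "card (V2 MP A1 A2 u1 u2) = 1"
      and \<sigma>: "mixed A1 \<sigma>" and a': "a' \<in> A1" and b: "b \<in> A2" and gain: "EU A1 A2 u1 \<sigma> (pt b) < u1 a' b"
      and br: "\<forall>b'\<in>A2. EU A1 A2 u2 \<sigma> (pt b') \<le> EU A1 A2 u2 \<sigma> (pt b)"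
      and decomp: "1 < card (support \<sigma>) \<longrightarrow> (\<exists>a0\<in>support \<sigma>. \<forall>a\<in>support \<sigma> - {a0}.
        \<exists>ds. set ds \<subseteq> differences (V1 MP A1 A2 u1 u2) \<and> u1 a0 b - u1 a b = sum_list ds)"
    have \<sigma>': "avail1 MP A1 \<sigma>" using \<sigma> by (simp add: avail1_MP)
    obtain a0 where a0: "a0 \<in> support \<sigma>" and diffs: "\<forall>a\<in>support \<sigma> - {a0}.
        \<exists>ds. set ds \<subseteq> differences (V1 MP A1 A2 u1 u2) \<and> u1 a0 b - u1 a b = sum_list ds"
      using support_anchor[OF fin(1) \<sigma>' decomp] by blast
    have "\<forall>a\<in>support \<sigma> - {a0}. \<exists>ps. set ps \<subseteq> NashSet MP A1 A2 u1 u2 \<times> NashSet MP A1 A2 u1 u2 \<and>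
        u1 a0 b - u1 a b = sum_list (map (\<lambda>(p, q). payoff_of A1 A2 u1 p - payoff_of A1 A2 u1 q) ps)"
      using diffs differences_as_pairs by metis
    then obtain pairs where "\<forall>a\<in>support \<sigma> - {a0}. set (pairs a) \<subseteq> NashSet MP A1 A2 u1 u2 \<times> NashSet MP A1 A2 u1 u2 \<and>
        u1 a0 b - u1 a b = sum_list (map (\<lambda>(p, q). payoff_of A1 A2 u1 p - payoff_of A1 A2 u1 q) (pairs a))"
      by metis
    then show ?thesis
      using G_LS_if_player1_values_vary[OF fin r V \<sigma>' a' b gain _ a0] br by blast
  next
    fix \<sigma> b b' assume V: "card (V1 MP A1 A2 u1 u2) = 1" "more_than_one (V2 MP A1 A2 u1 u2)"
      and "mixed A1 \<sigma>" "b \<in> A2" "b' \<in> A2" "EU A1 A2 u2 \<sigma> (pt b) < EU A1 A2 u2 \<sigma> (pt b')"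
      and "\<forall>\<tau>. mixed A1 \<tau> \<longrightarrow> EU A1 A2 u1 \<tau> (pt b) \<le> EU A1 A2 u1 \<sigma> (pt b)"
    then show ?thesis using G_LS_if_player2_values_vary[OF fin r V] by (simp add: avail1_MP)
  qed
qed

lemma C_mp_if_G_LS_MP:
  assumes fin: "finite A1" "finite A2" and ne: "a \<in> A1" "b0 \<in> A2" and LS: "G_LS MP A1 A2 u1 u2"
  shows "C_mp A1 A2 u1 u2"
proof -
  have r: "MP \<noteq> MM" by simp
  obtain \<mu>1 \<mu>2 h k where "last_deviation MP A1 A2 u1 u2 \<mu>1 \<mu>2 h k"
    using G_LS_obtain_last_deviation[OF fin r LS] .
  then interpret last_deviation MP A1 A2 u1 u2 \<mu>1 \<mu>2 h k .
  obtain b where b: "b \<in> A2" "\<mu>2 h = pt b"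
    using avail2_pure[OF _ r] strategies(2) by (meson strat2_def)
  have \<sigma>: "mixed A1 (\<mu>1 h)" using strategies(1) by (simp add: strat1_def avail1_MP)
  have "NashSet MP A1 A2 u1 u2 \<noteq> {}" using G_LS_imp_nash_exists[OF fin ne LS] .
  then have "V1 MP A1 A2 u1 u2 \<noteq> {}" "V2 MP A1 A2 u1 u2 \<noteq> {}"
    by (simp_all add: V1_eq_image V2_eq_image)
  then consider "more_than_one (V1 MP A1 A2 u1 u2)" "more_than_one (V2 MP A1 A2 u1 u2)"
    | "more_than_one (V1 MP A1 A2 u1 u2)" "card (V2 MP A1 A2 u1 u2) = 1"
    | "card (V1 MP A1 A2 u1 u2) = 1" "more_than_one (V2 MP A1 A2 u1 u2)"
    | "card (V1 MP A1 A2 u1 u2) = 1" "card (V2 MP A1 A2 u1 u2) = 1"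
    using card_1_or_more_than_one by metis
  then show ?thesis
  proof cases
    case 1
    then show ?thesis unfolding C_mp_iff using \<sigma> b not_nash by auto
  next
    case 2
    then obtain v where "V2 MP A1 A2 u1 u2 \<subseteq> {v}" by (metis card_1_singletonE order_refl)
    note gains = player1_gains[OF this b]
    have "\<exists>ds. set ds \<subseteq> differences (V1 MP A1 A2 u1 u2) \<and> u1 a0 b - u1 a' b = sum_list ds"
      if "a0 \<in> support (\<mu>1 h)" "a' \<in> support (\<mu>1 h)" for a0 a'
      using support_payoff_differences[OF b that] by metis
    moreover have "\<exists>a0. a0 \<in> support (\<mu>1 h)" if "1 < card (support (\<mu>1 h))"
      using that by (metis card.empty ex_in_conv not_less0)
    ultimately show ?thesis unfolding C_mp_iff using 2 \<sigma> b gains by blast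
  next
    case 3
    then obtain v where "V1 MP A1 A2 u1 u2 \<subseteq> {v}" by (metis card_1_singletonE order_refl)
    then have "\<exists>\<sigma> b b'. mixed A1 \<sigma> \<and> b \<in> A2 \<and> b' \<in> A2 \<and>
        EU A1 A2 u2 \<sigma> (pt b) < EU A1 A2 u2 \<sigma> (pt b') \<and>
        (\<forall>\<tau>. mixed A1 \<tau> \<longrightarrow> EU A1 A2 u1 \<tau> (pt b) \<le> EU A1 A2 u1 \<sigma> (pt b))"
      using \<sigma> b player2_gains[of v b] by (auto simp: avail1_MP)
    then show ?thesis unfolding C_mp_iff using 3 by blast
  next
    case 4
    then show ?thesis using values_not_both_unique by (metis card_1_singletonE order_refl)
  qed
qed

lemma G_LS_MP_iff_C_mp:
  assumes "finite A1" "finite A2" "a \<in> A1" "b \<in> A2"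
  shows "G_LS MP A1 A2 u1 u2 \<longleftrightarrow> C_mp A1 A2 u1 u2"
  using C_mp_if_G_LS_MP[OF assms] G_LS_MP_if_C_mp[OF assms(1,2)] by blast

section \<open>The pure-pure regime\<close>

definition gain1_at_best_reply2 :: "'a set \<Rightarrow> 'b set \<Rightarrow> ('a \<Rightarrow> 'b \<Rightarrow> real) \<Rightarrow> ('a \<Rightarrow> 'b \<Rightarrow> real) \<Rightarrow> bool"
  where "gain1_at_best_reply2 A1 A2 u1 u2 \<longleftrightarrow> (\<exists>a1 a1' a2. a1 \<in> A1 \<and> a1' \<in> A1 \<and> a2 \<in> A2 \<and>
    u1 a1 a2 < u1 a1' a2 \<and> (\<forall>b\<in>A2. u2 a1 b \<le> u2 a1 a2))"

definition gain2_at_best_reply1 :: "'a set \<Rightarrow> 'b set \<Rightarrow> ('a \<Rightarrow> 'b \<Rightarrow> real) \<Rightarrow> ('a \<Rightarrow> 'b \<Rightarrow> real) \<Rightarrow> bool"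
  where "gain2_at_best_reply1 A1 A2 u1 u2 \<longleftrightarrow> (\<exists>a1 a2 a2'. a1 \<in> A1 \<and> a2 \<in> A2 \<and> a2' \<in> A2 \<and>
    u2 a1 a2 < u2 a1 a2' \<and> (\<forall>a\<in>A1. u1 a a2 \<le> u1 a1 a2))"

lemma no_gain1_at_best_reply2D:
  assumes "\<not> gain1_at_best_reply2 A1 A2 u1 u2" "a \<in> A1" "b \<in> A2" "\<forall>b'\<in>A2. u2 a b' \<le> u2 a b" "a' \<in> A1"
  shows "u1 a' b \<le> u1 a b"
  using assms unfolding gain1_at_best_reply2_def by (metis not_le)

lemma no_gain2_at_best_reply1D:
  assumes "\<not> gain2_at_best_reply1 A1 A2 u1 u2" "a \<in> A1" "b \<in> A2" "\<forall>a'\<in>A1. u1 a' b \<le> u1 a b" "b' \<in> A2"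
  shows "u2 a b' \<le> u2 a b"
  using assms unfolding gain2_at_best_reply1_def by (metis not_le)

lemma not_G_LS_PP_if_no_gain1_at_best_reply2:
  assumes fin: "finite A1" "finite A2" and "card (V2 PP A1 A2 u1 u2) = 1"
    and no_gain: "\<not> gain1_at_best_reply2 A1 A2 u1 u2"
  shows "\<not> G_LS PP A1 A2 u1 u2"
proof
  have r: "PP \<noteq> MM" by simp
  assume "G_LS PP A1 A2 u1 u2"
  then obtain \<mu>1 \<mu>2 h k where "last_deviation PP A1 A2 u1 u2 \<mu>1 \<mu>2 h k"
    using G_LS_obtain_last_deviation[OF fin r] by blast
  then interpret last_deviation PP A1 A2 u1 u2 \<mu>1 \<mu>2 h k .
  have "avail1 PP A1 (\<mu>1 h)" "avail2 PP A2 (\<mu>2 h)"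
    using strategies by (simp_all add: strat1_def strat2_def)
  then obtain a1 a2 where a: "a1 \<in> A1" "\<mu>1 h = pt a1" "a2 \<in> A2" "\<mu>2 h = pt a2"
    using avail2_pure[OF _ r] unfolding avail1_PP by blast
  obtain v where "V2 PP A1 A2 u1 u2 \<subseteq> {v}" using assms(3) by (metis card_1_singletonE order_refl)
  from player1_gains(1)[OF this a(3,4)] have "\<forall>b\<in>A2. u2 a1 b \<le> u2 a1 a2"
    using a fin by (simp add: EU_pt_pt)
  then have "\<forall>a\<in>A1. u1 a a2 \<le> u1 a1 a2"
    using no_gain1_at_best_reply2D[OF no_gain a(1,3)] by blast
  with \<open>\<forall>b\<in>A2. u2 a1 b \<le> u2 a1 a2\<close> show False
    using not_nash a by (simp add: nash_pt_pt_iff[OF fin r])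
qed

lemma V1_MP_subset_if_no_gain2_at_best_reply1:
  assumes fin: "finite A1" "finite A2" and V1: "V1 PP A1 A2 u1 u2 \<subseteq> {v}"
    and no_gain: "\<not> gain2_at_best_reply1 A1 A2 u1 u2"
  shows "V1 MP A1 A2 u1 u2 \<subseteq> {v}"
proof
  have r: "MP \<noteq> MM" "PP \<noteq> MM" by simp_all
  fix x assume "x \<in> V1 MP A1 A2 u1 u2"
  then obtain \<sigma> \<tau> where nash: "nash MP A1 A2 u1 u2 \<sigma> \<tau>" and x: "x = EU A1 A2 u1 \<sigma> \<tau>"
    by (auto simp: V1_def NashSet_def)
  obtain b where b: "b \<in> A2" "\<tau> = pt b" using avail2_pure[OF _ r(1)] nash by (meson nash_def)
  have \<sigma>: "avail1 MP A1 \<sigma>" using nash by (simp add: nash_def)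
  obtain a where a: "a \<in> A1" "0 < \<sigma> a" using avail1_support_nonempty[OF fin(1) \<sigma>] .
  have br1: "\<forall>a'\<in>A1. u1 a' b \<le> EU A1 A2 u1 \<sigma> (pt b)"
    using nash b by (simp add: nash_pt_right_iff[OF fin r(1)])
  have x_eq: "u1 a b = x" using best_response_support[OF fin \<sigma> b(1) _ a] br1 x b(2) by simp
  have "\<forall>a'\<in>A1. u1 a' b \<le> u1 a b" using br1 x_eq x b(2) by simp
  then have "\<forall>b'\<in>A2. u2 a b' \<le> u2 a b"
    using no_gain2_at_best_reply1D[OF no_gain a(1) b(1)] by blast
  then have "nash PP A1 A2 u1 u2 (pt a) (pt b)"
    using br1 x_eq x b a(1) by (simp add: nash_pt_pt_iff[OF fin r(2)])
  then have "payoff_of A1 A2 u1 (pt a, pt b) \<in> V1 PP A1 A2 u1 u2"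
    unfolding V1_eq_image by (intro imageI) (simp add: mem_NashSet)
  then show "x \<in> {v}" using V1 x_eq EU_pt_pt[OF fin a(1) b(1)] by (auto simp: payoff_of_def)
qed

lemma not_G_LS_MP_if_no_gain2_at_best_reply1:
  assumes fin: "finite A1" "finite A2" and "V1 MP A1 A2 u1 u2 \<subseteq> {v}"
    and no_gain: "\<not> gain2_at_best_reply1 A1 A2 u1 u2"
  shows "\<not> G_LS MP A1 A2 u1 u2"
proof
  have r: "MP \<noteq> MM" by simp
  assume "G_LS MP A1 A2 u1 u2"
  then obtain \<mu>1 \<mu>2 h k where "last_deviation MP A1 A2 u1 u2 \<mu>1 \<mu>2 h k"
    using G_LS_obtain_last_deviation[OF fin r] by blast
  then interpret last_deviation MP A1 A2 u1 u2 \<mu>1 \<mu>2 h k .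
  obtain b where b: "b \<in> A2" "\<mu>2 h = pt b" using avail2_pure[OF _ r] strategies(2) by (meson strat2_def)
  have \<sigma>: "avail1 MP A1 (\<mu>1 h)" using strategies(1) by (simp add: strat1_def)
  have br1: "\<forall>a\<in>A1. u1 a b \<le> EU A1 A2 u1 (\<mu>1 h) (pt b)"
    using player2_gains(1)[OF assms(3) b] by (simp add: pure_deviations_suffice[OF fin r b(1)])
  have "u2 a b' \<le> u2 a b" if "a \<in> A1" "0 < \<mu>1 h a" "b' \<in> A2" for a b'
  proof -
    have "\<forall>a'\<in>A1. u1 a' b \<le> u1 a b" using best_response_support[OF fin \<sigma> b(1) _ that(1,2), of u1] br1 by simp
    then show ?thesis using no_gain2_at_best_reply1D[OF no_gain that(1) b(1)] that(3) by blast
  qed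
  then have "\<mu>1 h a * u2 a b' \<le> \<mu>1 h a * u2 a b" if "a \<in> A1" "b' \<in> A2" for a b'
    using that avail1_nonneg[OF \<sigma>, of a] by (cases "\<mu>1 h a = 0") (simp_all add: mult_left_mono)
  then have "(\<Sum>a\<in>A1. \<mu>1 h a * u2 a b') \<le> (\<Sum>a\<in>A1. \<mu>1 h a * u2 a b)" if "b' \<in> A2" for b'
    using that by (intro sum_mono) simp
  then show False
    using not_nash br1 \<sigma> b by (simp add: nash_pt_right_iff[OF fin r b(1)] EU_pt_right[OF fin(2)])
qed

lemma not_G_LS_MP_if_all_pure_nash:
  assumes fin: "finite A1" "finite A2"
    and all: "\<And>a b. a \<in> A1 \<Longrightarrow> b \<in> A2 \<Longrightarrow> nash PP A1 A2 u1 u2 (pt a) (pt b)"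
  shows "\<not> G_LS MP A1 A2 u1 u2"
proof
  have r: "MP \<noteq> MM" "PP \<noteq> MM" by simp_all
  have u1: "u1 a b = u1 a' b" if "a \<in> A1" "a' \<in> A1" "b \<in> A2" for a a' b
    using all[of a b] all[of a' b] that by (simp add: nash_pt_pt_iff[OF fin r(2)] order.antisym)
  have u2: "u2 a b = u2 a b'" if "a \<in> A1" "b \<in> A2" "b' \<in> A2" for a b b'
    using all[of a b] all[of a b'] that by (simp add: nash_pt_pt_iff[OF fin r(2)] order.antisym)
  assume "G_LS MP A1 A2 u1 u2"
  then obtain T \<mu>1 \<mu>2 h where spe: "SPE MP A1 A2 u1 u2 T \<mu>1 \<mu>2"
    and not_nash: "\<not> nash MP A1 A2 u1 u2 (\<mu>1 h) (\<mu>2 h)"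
    by (auto simp: G_LS_def)
  have av: "avail1 MP A1 (\<mu>1 h)" "avail2 MP A2 (\<mu>2 h)"
    using spe by (simp_all add: SPE_def strat1_def strat2_def)
  obtain b where b: "b \<in> A2" "\<mu>2 h = pt b" using avail2_pure[OF av(2) r(1)] by blast
  have br1: "u1 a b \<le> EU A1 A2 u1 (\<mu>1 h) (pt b)" if "a \<in> A1" for a
  proof -
    have "(\<Sum>a'\<in>A1. \<mu>1 h a' * u1 a' b) = (\<Sum>a'\<in>A1. \<mu>1 h a' * u1 a b)"
      using u1[OF _ that b(1)] by (intro sum.cong) simp_all
    then show ?thesis
      using avail1_sum[OF fin(1) av(1)] by (simp add: EU_pt_right[OF fin(2) b(1)] flip: sum_distrib_right)
  qed
  have br2: "EU A1 A2 u2 (\<mu>1 h) (pt b') \<le> EU A1 A2 u2 (\<mu>1 h) (pt b)" if "b' \<in> A2" for b'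
  proof -
    have "(\<Sum>a\<in>A1. \<mu>1 h a * u2 a b') = (\<Sum>a\<in>A1. \<mu>1 h a * u2 a b)"
      using u2[OF _ b(1) that] by (intro sum.cong) simp_all
    then show ?thesis by (simp add: EU_pt_right[OF fin(2)] that b(1))
  qed
  have "nash MP A1 A2 u1 u2 (\<mu>1 h) (pt b)"
    unfolding nash_pt_right_iff[OF fin r(1) b(1)] using av(1) br1 br2 by blast
  then show False using not_nash b(2) by simp
qed

definition no_LS_PP_condition :: "'a set \<Rightarrow> 'b set \<Rightarrow> ('a \<Rightarrow> 'b \<Rightarrow> real) \<Rightarrow> ('a \<Rightarrow> 'b \<Rightarrow> real) \<Rightarrow> bool"
  where "no_LS_PP_condition A1 A2 u1 u2 \<longleftrightarrow>
    (V1 PP A1 A2 u1 u2 = {} \<and> V2 PP A1 A2 u1 u2 = {})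
    \<or> (card (V1 PP A1 A2 u1 u2) = 1 \<and> card (V2 PP A1 A2 u1 u2) = 1)
    \<or> (more_than_one (V1 PP A1 A2 u1 u2) \<and> card (V2 PP A1 A2 u1 u2) = 1 \<and> \<not> gain1_at_best_reply2 A1 A2 u1 u2)"

lemma not_G_LS_PP_if_no_LS_PP_condition:
  assumes fin: "finite A1" "finite A2" and ne: "a \<in> A1" "b \<in> A2" and "no_LS_PP_condition A1 A2 u1 u2"
  shows "\<not> G_LS PP A1 A2 u1 u2"
  using assms(5) unfolding no_LS_PP_condition_def
proof (elim disjE conjE)
  assume "V1 PP A1 A2 u1 u2 = {}"
  then show ?thesis using G_LS_imp_nash_exists[OF fin ne] by (auto simp: V1_eq_image)
qed (use not_G_LS_if_unique_values[OF fin] not_G_LS_PP_if_no_gain1_at_best_reply2[OF fin] in auto)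

lemma G_LS_PP_if_gain1_at_best_reply2:
  assumes fin: "finite A1" "finite A2"
    and "more_than_one (V1 PP A1 A2 u1 u2)" "card (V2 PP A1 A2 u1 u2) = 1"
    and "gain1_at_best_reply2 A1 A2 u1 u2"
  shows "G_LS PP A1 A2 u1 u2"
proof -
  have r: "PP \<noteq> MM" by simp
  obtain a1 a1' a2 where a: "a1 \<in> A1" "a1' \<in> A1" "a2 \<in> A2" "u1 a1 a2 < u1 a1' a2"
    and br: "\<forall>b\<in>A2. u2 a1 b \<le> u2 a1 a2"
    using assms(5) by (auto simp: gain1_at_best_reply2_def)
  show ?thesis
  proof (rule G_LS_if_player1_values_vary[OF fin r assms(3,4) avail1_pt[OF fin(1) a(1) r] a(2,3),
        where pairs = "\<lambda>_. []"])
    show "EU A1 A2 u1 (pt a1) (pt a2) < u1 a1' a2" using a by (simp add: EU_pt_pt fin)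
    show "EU A1 A2 u2 (pt a1) (pt b) \<le> EU A1 A2 u2 (pt a1) (pt a2)" if "b \<in> A2" for b
      using br a that by (simp add: EU_pt_pt fin)
  qed (simp_all add: support_pt)
qed

lemma G_LS_PP_if_gain2_at_best_reply1:
  assumes fin: "finite A1" "finite A2"
    and "card (V1 PP A1 A2 u1 u2) = 1" "more_than_one (V2 PP A1 A2 u1 u2)"
    and "gain2_at_best_reply1 A1 A2 u1 u2"
  shows "G_LS PP A1 A2 u1 u2"
proof -
  have r: "PP \<noteq> MM" by simp
  obtain a1 a2 a2' where a: "a1 \<in> A1" "a2 \<in> A2" "a2' \<in> A2" "u2 a1 a2 < u2 a1 a2'"
    and br: "\<forall>a\<in>A1. u1 a a2 \<le> u1 a1 a2"
    using assms(5) by (auto simp: gain2_at_best_reply1_def)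
  show ?thesis
  proof (rule G_LS_if_player2_values_vary[OF fin r assms(3,4) avail1_pt[OF fin(1) a(1) r] a(2,3)])
    show "EU A1 A2 u2 (pt a1) (pt a2) < EU A1 A2 u2 (pt a1) (pt a2')" using a by (simp add: EU_pt_pt fin)
    show "EU A1 A2 u1 \<tau> (pt a2) \<le> EU A1 A2 u1 (pt a1) (pt a2)" if "avail1 PP A1 \<tau>" for \<tau>
      using that br a by (auto simp: EU_pt_pt fin avail1_PP)
  qed
qed

lemma no_LS_PP_condition_if_not_G_LS_PP:
  assumes fin: "finite A1" "finite A2"
    and not_PP: "\<not> G_LS PP A1 A2 u1 u2" and MP: "G_LS MP A1 A2 u1 u2"
  shows "no_LS_PP_condition A1 A2 u1 u2"
proof (cases "NashSet PP A1 A2 u1 u2 = {}")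
  case True
  then show ?thesis by (simp add: no_LS_PP_condition_def V1_eq_image V2_eq_image)
next
  case False
  then have "V1 PP A1 A2 u1 u2 \<noteq> {}" "V2 PP A1 A2 u1 u2 \<noteq> {}" by (simp_all add: V1_eq_image V2_eq_image)
  then consider "card (V1 PP A1 A2 u1 u2) = 1" "card (V2 PP A1 A2 u1 u2) = 1"
    | "more_than_one (V1 PP A1 A2 u1 u2)" "card (V2 PP A1 A2 u1 u2) = 1"
    | "card (V1 PP A1 A2 u1 u2) = 1" "more_than_one (V2 PP A1 A2 u1 u2)"
    | "more_than_one (V1 PP A1 A2 u1 u2)" "more_than_one (V2 PP A1 A2 u1 u2)"
    using card_1_or_more_than_one by metis
  then show ?thesis
  proof cases
    case 2
    then show ?thesis using G_LS_PP_if_gain1_at_best_reply2[OF fin] not_PP by (auto simp: no_LS_PP_condition_def)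
  next
    case 3
    then obtain v where "V1 PP A1 A2 u1 u2 \<subseteq> {v}" by (metis card_1_singletonE order_refl)
    then show ?thesis
      using G_LS_PP_if_gain2_at_best_reply1[OF fin 3] V1_MP_subset_if_no_gain2_at_best_reply1[OF fin]
        not_G_LS_MP_if_no_gain2_at_best_reply1[OF fin] not_PP MP by blast
  next
    case 4
    then show ?thesis
      using G_LS_if_values_vary[OF fin _ 4] not_G_LS_MP_if_all_pure_nash[OF fin] not_PP MP by blast
  qed (simp add: no_LS_PP_condition_def)
qed

lemma not_G_LS_PP_iff_no_LS_PP_condition:
  assumes "finite A1" "finite A2" "a \<in> A1" "b \<in> A2" "G_LS MP A1 A2 u1 u2"
  shows "\<not> G_LS PP A1 A2 u1 u2 \<longleftrightarrow> no_LS_PP_condition A1 A2 u1 u2"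
  using not_G_LS_PP_if_no_LS_PP_condition[OF assms(1-4)] no_LS_PP_condition_if_not_G_LS_PP[OF assms(1,2) _ assms(5)] by blast

theorem mainTheorem11:
  fixes A1 :: "'a set" and A2 :: "'b set" and u1 u2 :: "'a \<Rightarrow> 'b \<Rightarrow> real"
  assumes "finite A1" "A1 \<noteq> {}" "finite A2" "A2 \<noteq> {}"
  shows "(\<not> G_LS PP A1 A2 u1 u2 \<and> G_LS MP A1 A2 u1 u2) \<longleftrightarrow>
    ((V1 PP A1 A2 u1 u2 = {} \<and> V2 PP A1 A2 u1 u2 = {} \<and> C_mp A1 A2 u1 u2)
     \<or> (card (V1 PP A1 A2 u1 u2) = 1 \<and> card (V2 PP A1 A2 u1 u2) = 1 \<and> C_mp A1 A2 u1 u2)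
     \<or> (more_than_one (V1 PP A1 A2 u1 u2) \<and> card (V2 PP A1 A2 u1 u2) = 1 \<and>
        \<not> (\<exists>a1 a1' a2. a1 \<in> A1 \<and> a1' \<in> A1 \<and> a2 \<in> A2 \<and> u1 a1 a2 < u1 a1' a2 \<and>
              (\<forall>b\<in>A2. u2 a1 b \<le> u2 a1 a2)) \<and>
        C_mp A1 A2 u1 u2))"
proof -
  obtain a b where ne: "a \<in> A1" "b \<in> A2" using assms(2,4) by blast
  note fin = assms(1,3)
  have "(\<not> G_LS PP A1 A2 u1 u2 \<and> G_LS MP A1 A2 u1 u2) \<longleftrightarrow> no_LS_PP_condition A1 A2 u1 u2 \<and> C_mp A1 A2 u1 u2"
    using not_G_LS_PP_iff_no_LS_PP_condition[OF fin ne] G_LS_MP_iff_C_mp[OF fin ne] by blast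
  then show ?thesis unfolding no_LS_PP_condition_def gain1_at_best_reply2_def by blast
qed

end
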